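(* For $0<a<1$ let $T_a:[0,1]\to[0,1]$ be $T_a(x)=x/a$ for $0\le x\le a$ and $T_a(x)=(1-x)/(1-a)$ for $a<x\le1$. If $a_1,\dots,a_k\in(0,1)$ satisfy $a_i\ne a_j$ and $a_i\ne1-a_j$ for all $i\ne j$, then $T_{a_1},\dots,T_{a_k}$ are jointly mixing with respect to Lebesgue measure $\lambda$: for all Borel sets $A_0,A_1,\dots,A_k\subset[0,1]$, $\lim_{n\to\infty}\lambda(A_0\cap T_{a_1}^{-n}A_1\cap\cdots\cap T_{a_k}^{-n}A_k)=\prod_{i=0}^k\lambda(A_i)$.
   Context: Each $T_a$ preserves Lebesgue measure $\lambda$ on $[0,1]$. *)

theory Defs
  imports "HOL-Analysis.Analysis"
begin

definition T :: "real \<Rightarrow> real \<Rightarrow> real" where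
  "T a x = (if x \<le> a then x / a else (1 - x) / (1 - a))"

definition Tpre :: "real \<Rightarrow> nat \<Rightarrow> real set \<Rightarrow> real set" where
  "Tpre a n A = {x \<in> {0..1}. (T a ^^ n) x \<in> A}"

end

theory Submission
  imports Defs
begin

text \<open>
  The iterate \<open>T a ^^ n\<close> is piecewise affine: \<open>[0, 1]\<close> is cut into \<open>2 ^ n\<close> cylinder intervals,
  each mapped affinely onto \<open>[0, 1]\<close>, with lengths \<open>a ^ k (1 - a) ^ (n - k)\<close>. Hence \<open>T a\<close>
  preserves Lebesgue measure, and by a Chebyshev bound almost all of the mass lies on cylinders of
  length about \<open>exp (- n h(a))\<close>, where \<open>h\<close> is the binary entropy. The hypotheses on the \<open>a i\<close> say
  exactly that their entropies are distinct. Take the map of largest entropy: its typical cylinders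
  are exponentially shorter than those of the other maps, so most of them lie inside a single
  cylinder of each other map, where the other iterates are affine with small slope and hence nearly
  constant, while the fastest iterate spreads each of its cylinders uniformly over \<open>[0, 1]\<close>. This
  decouples the fastest factor, and induction on the number of maps gives mixing for Lipschitz
  observables. Indicators of Borel sets are approximated in \<open>L\<^sup>1\<close> by Lipschitz functions, uniformly
  in \<open>n\<close> thanks to the invariance of Lebesgue measure.
\<close>

section \<open>Inverse branches and cylinders\<close>

text \<open>
  A word \<open>w\<close> of length \<open>n\<close> prescribes on which side of \<open>a\<close> the points \<open>x, T a x, \<dots>, T a ^^ (n - 1) x\<close>
  lie (\<open>True\<close> for \<open>[0, a]\<close>); \<open>cylinder a w\<close> is the set of these points, the image of \<open>[0, 1]\<close>
  under the composition \<open>cyl_map a w\<close> of inverse branches.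
\<close>

definition branch :: "real \<Rightarrow> bool \<Rightarrow> real \<Rightarrow> real" where
  "branch a left y = (if left then a * y else 1 - (1 - a) * y)"

definition branch_ratio :: "real \<Rightarrow> bool \<Rightarrow> real" where
  "branch_ratio a left = (if left then a else 1 - a)"

fun cyl_map :: "real \<Rightarrow> bool list \<Rightarrow> real \<Rightarrow> real" where
  "cyl_map a [] = id"
| "cyl_map a (s # w) = branch a s \<circ> cyl_map a w"

fun cyl_len :: "real \<Rightarrow> bool list \<Rightarrow> real" where
  "cyl_len a [] = 1"
| "cyl_len a (s # w) = branch_ratio a s * cyl_len a w"

definition words :: "nat \<Rightarrow> bool list set" where
  "words n = {w. length w = n}"

definition cylinder :: "real \<Rightarrow> bool list \<Rightarrow> real set" where
  "cylinder a w = cyl_map a w ` {0..1}"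

lemma finite_words [simp]: "finite (words n)"
  unfolding words_def using finite_lists_length_eq[of "UNIV :: bool set" n] by simp

lemma words_0: "words 0 = {[]}"
  unfolding words_def by auto

lemma sum_words_Suc:
  "(\<Sum>w\<in>words (Suc n). f w) = (\<Sum>w\<in>words n. f (True # w)) + (\<Sum>w\<in>words n. f (False # w))"
proof -
  have split: "words (Suc n) = Cons True ` words n \<union> Cons False ` words n"
    unfolding words_def by (auto simp: length_Suc_conv image_iff)
  have "(\<Sum>w\<in>words (Suc n). f w) = (\<Sum>w\<in>Cons True ` words n. f w) + (\<Sum>w\<in>Cons False ` words n. f w)"
    unfolding split by (rule sum.union_disjoint) auto
  then show ?thesis
    by (simp add: sum.reindex)
qed

context
  fixes a :: real
  assumes a: "0 < a" "a < 1"
begin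

lemma cyl_len_pos: "0 < cyl_len a w"
  using a by (induction w) (auto simp: branch_ratio_def)

lemma cyl_len_nonneg: "0 \<le> cyl_len a w"
  using cyl_len_pos by (rule less_imp_le)

lemma sum_cyl_len: "(\<Sum>w\<in>words n. cyl_len a w) = 1"
  by (induction n) (simp_all add: words_0 sum_words_Suc branch_ratio_def flip: sum_distrib_left)

lemma cyl_len_le_power: "cyl_len a w \<le> max a (1 - a) ^ length w"
proof (induction w)
  case (Cons s w)
  have "cyl_len a (s # w) \<le> max a (1 - a) * max a (1 - a) ^ length w"
    using Cons cyl_len_nonneg[of w] by (auto simp: branch_ratio_def intro: mult_mono)
  then show ?case by simp
qed simp

lemma branch_in_unit:
  assumes "y \<in> {0..1}"
  shows "branch a s y \<in> {0..1}"
proof -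
  have "0 \<le> a * y" "a * y \<le> 1" "0 \<le> (1 - a) * y" "(1 - a) * y \<le> 1"
    using a assms by (simp_all add: mult_le_one)
  then show ?thesis by (simp add: branch_def)
qed

lemma cyl_map_in_unit: "y \<in> {0..1} \<Longrightarrow> cyl_map a w y \<in> {0..1}"
proof (induction w arbitrary: y)
  case (Cons s w)
  then have "cyl_map a w y \<in> {0..1}" by blast
  then show ?case by (simp add: branch_in_unit del: atLeastAtMost_iff)
qed simp

lemma T_branch: "y \<in> {0..1} \<Longrightarrow> T a (branch a s y) = y"
proof (cases s)
  case True
  assume "y \<in> {0..1}"
  then have "a * y \<le> a" using a by (simp add: mult_left_le)
  then show ?thesis using True a by (simp add: branch_def T_def)
next
  case False
  assume y: "y \<in> {0..1}"
  show ?thesis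
  proof (cases "1 - (1 - a) * y \<le> a")
    case True
    \<comment> \<open>only possible for \<open>y = 1\<close>, where the two branches of \<open>T a\<close> agree\<close>
    then have "(1 - a) * 1 \<le> (1 - a) * y" by (simp add: algebra_simps)
    then have "y = 1" using a y by auto
    then show ?thesis using False a by (simp add: branch_def T_def)
  qed (use False a in \<open>simp add: branch_def T_def\<close>)
qed

lemma T_funpow_cyl_map: "y \<in> {0..1} \<Longrightarrow> (T a ^^ length w) (cyl_map a w y) = y"
proof (induction w arbitrary: y)
  case (Cons s w)
  have "(T a ^^ length (s # w)) (cyl_map a (s # w) y) = (T a ^^ length w) (T a (branch a s (cyl_map a w y)))"
    by (simp only: length_Cons funpow_Suc_right comp_def cyl_map.simps)
  also have "\<dots> = y"
    using Cons cyl_map_in_unit T_branch by simp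
  finally show ?case .
qed simp

lemma cyl_map_affine: "\<exists>c s. cyl_map a w = (\<lambda>y. s * y + c) \<and> \<bar>s\<bar> = cyl_len a w"
proof (induction w)
  case Nil
  show ?case by (intro exI[of _ 0] exI[of _ 1]) (simp add: fun_eq_iff)
next
  case (Cons b w)
  then obtain c s where cs: "cyl_map a w = (\<lambda>y. s * y + c)" "\<bar>s\<bar> = cyl_len a w" by blast
  show ?case
  proof (cases b)
    case True
    have "cyl_map a (b # w) = (\<lambda>y. (a * s) * y + a * c)"
      using True cs by (simp add: branch_def fun_eq_iff algebra_simps)
    moreover have "\<bar>a * s\<bar> = cyl_len a (b # w)"
      using True cs a by (simp add: branch_ratio_def abs_mult)
    ultimately show ?thesis by blast
  next
    case False
    have "cyl_map a (b # w) = (\<lambda>y. ((a - 1) * s) * y + (1 - (1 - a) * c))"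
      using False cs by (simp add: branch_def fun_eq_iff algebra_simps)
    moreover have "\<bar>(a - 1) * s\<bar> = cyl_len a (b # w)"
      using False cs a by (simp add: branch_ratio_def abs_mult)
    ultimately show ?thesis by blast
  qed
qed

lemma cylinder_eq_interval: "\<exists>l. cylinder a w = {l..l + cyl_len a w}"
proof -
  obtain c s where cs: "cyl_map a w = (\<lambda>y. s * y + c)" "\<bar>s\<bar> = cyl_len a w"
    using cyl_map_affine by blast
  have "cylinder a w = (if 0 \<le> s then {c..s + c} else {s + c..c})"
    by (simp add: cylinder_def cs(1) image_affinity_atLeastAtMost)
  then show ?thesis
    using cs(2) by (cases "0 \<le> s") auto
qed

lemma cylinder_subset_unit: "cylinder a w \<subseteq> {0..1}"
  using cyl_map_in_unit by (auto simp: cylinder_def)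

lemma measure_cylinder: "measure lborel (cylinder a w) = cyl_len a w"
  using cylinder_eq_interval[of w] cyl_len_pos[of w] by auto

lemma cylinder_borel: "cylinder a w \<in> sets borel"
  using cylinder_eq_interval[of w] by auto

lemma cylinder_diam: "x \<in> cylinder a w \<Longrightarrow> x' \<in> cylinder a w \<Longrightarrow> \<bar>x - x'\<bar> \<le> cyl_len a w"
  using cylinder_eq_interval[of w] by auto

lemma T_funpow_expands_cylinder:
  assumes "x \<in> cylinder a w" "x' \<in> cylinder a w"
  shows "\<bar>(T a ^^ length w) x - (T a ^^ length w) x'\<bar> = \<bar>x - x'\<bar> / cyl_len a w"
proof -
  obtain c s where cs: "cyl_map a w = (\<lambda>y. s * y + c)" "\<bar>s\<bar> = cyl_len a w"
    using cyl_map_affine by blast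
  obtain y y' where y: "y \<in> {0..1}" "y' \<in> {0..1}" "x = cyl_map a w y" "x' = cyl_map a w y'"
    using assms by (auto simp: cylinder_def)
  have "x - x' = s * (y - y')"
    using y cs by (simp add: algebra_simps)
  then have "\<bar>x - x'\<bar> = cyl_len a w * \<bar>y - y'\<bar>"
    using cs by (simp add: abs_mult)
  moreover have "(T a ^^ length w) x = y" "(T a ^^ length w) x' = y'"
    using y T_funpow_cyl_map by auto
  ultimately show ?thesis
    using cyl_len_pos[of w] by simp
qed

lemma cylinders_cover: "x \<in> {0..1} \<Longrightarrow> \<exists>w\<in>words n. x \<in> cylinder a w"
proof (induction n arbitrary: x)
  case 0
  then show ?case by (simp add: words_0 cylinder_def)
next
  case (Suc n)
  obtain s y where sy: "y \<in> {0..1}" "x = branch a s y"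
  proof (cases "x \<le> a")
    case True
    then show ?thesis using that[of "x / a" True] Suc.prems a by (auto simp: branch_def field_simps)
  next
    case False
    then show ?thesis using that[of "(1 - x) / (1 - a)" False] Suc.prems a by (auto simp: branch_def field_simps)
  qed
  then obtain w z where wz: "w \<in> words n" "z \<in> {0..1}" "y = cyl_map a w z"
    using Suc.IH[of y] by (auto simp: cylinder_def)
  then have "s # w \<in> words (Suc n)" "x = cyl_map a (s # w) z"
    using sy by (simp_all add: words_def)
  then show ?case
    using wz(2) unfolding cylinder_def by blast
qed

end

lemma T_measurable [measurable]: "T a \<in> borel_measurable borel"
  unfolding T_def by measurable

lemma T_funpow_measurable [measurable]: "(T a ^^ n) \<in> borel_measurable borel"
  by (induction n) (auto simp: funpow_Suc_right intro: measurable_compose)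

lemma branch_measurable [measurable]: "branch a s \<in> borel_measurable borel"
  unfolding branch_def[abs_def] by measurable

lemma cyl_map_measurable [measurable]: "cyl_map a w \<in> borel_measurable borel"
  by (induction w) (auto intro: measurable_comp)

definition unit_integral :: "(real \<Rightarrow> real) \<Rightarrow> real" where
  "unit_integral f = (\<integral>x. indicator {0..1} x * f x \<partial>lborel)"

definition bounded_measurable :: "(real \<Rightarrow> real) \<Rightarrow> bool" where
  "bounded_measurable f \<longleftrightarrow> f \<in> borel_measurable borel \<and> (\<exists>B. \<forall>x. \<bar>f x\<bar> \<le> B)"

lemma bounded_measurable_const: "bounded_measurable (\<lambda>_. c)"
  by (auto simp: bounded_measurable_def)

lemma bounded_measurable_indicator: "U \<in> sets borel \<Longrightarrow> bounded_measurable (indicator U)"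
  by (auto simp: bounded_measurable_def intro!: exI[of _ 1])

lemma bounded_measurableI:
  "f \<in> borel_measurable borel \<Longrightarrow> (\<And>x. \<bar>f x\<bar> \<le> B) \<Longrightarrow> bounded_measurable f"
  by (auto simp: bounded_measurable_def)

lemma bounded_measurable_abs: "bounded_measurable f \<Longrightarrow> bounded_measurable (\<lambda>x. \<bar>f x\<bar>)"
  by (auto simp: bounded_measurable_def)

lemma bounded_measurable_add:
  assumes "bounded_measurable f" "bounded_measurable g"
  shows "bounded_measurable (\<lambda>x. f x + g x)"
proof -
  obtain B C where "\<And>x. \<bar>f x\<bar> \<le> B" "\<And>x. \<bar>g x\<bar> \<le> C"
    using assms by (auto simp: bounded_measurable_def)
  then have "\<bar>f x + g x\<bar> \<le> B + C" for x
    by (meson abs_triangle_ineq add_mono order_trans)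
  then show ?thesis
    using assms by (auto simp: bounded_measurable_def)
qed

lemma bounded_measurable_diff:
  assumes "bounded_measurable f" "bounded_measurable g"
  shows "bounded_measurable (\<lambda>x. f x - g x)"
proof -
  obtain B C where "\<And>x. \<bar>f x\<bar> \<le> B" "\<And>x. \<bar>g x\<bar> \<le> C"
    using assms by (auto simp: bounded_measurable_def)
  then have "\<bar>f x - g x\<bar> \<le> B + C" for x
    by (meson abs_triangle_ineq4 add_mono order_trans)
  then show ?thesis
    using assms by (auto simp: bounded_measurable_def)
qed

lemma bounded_measurable_mult:
  assumes "bounded_measurable f" "bounded_measurable g"
  shows "bounded_measurable (\<lambda>x. f x * g x)"
proof -
  obtain B C where "\<And>x. \<bar>f x\<bar> \<le> B" "\<And>x. \<bar>g x\<bar> \<le> C"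
    using assms by (auto simp: bounded_measurable_def)
  then have "\<bar>f x * g x\<bar> \<le> B * C" for x
    unfolding abs_mult by (meson abs_ge_zero mult_mono order_trans)
  then show ?thesis
    using assms by (auto simp: bounded_measurable_def)
qed

lemma bounded_measurable_sum:
  "(\<And>i. i \<in> S \<Longrightarrow> bounded_measurable (f i)) \<Longrightarrow> bounded_measurable (\<lambda>x. \<Sum>i\<in>S. f i x)"
  by (induction S rule: infinite_finite_induct) (auto intro: bounded_measurable_add bounded_measurable_const)

lemma bounded_measurable_prod:
  "(\<And>i. i \<in> S \<Longrightarrow> bounded_measurable (f i)) \<Longrightarrow> bounded_measurable (\<lambda>x. \<Prod>i\<in>S. f i x)"
  by (induction S rule: infinite_finite_induct) (auto intro: bounded_measurable_mult bounded_measurable_const)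

lemma bounded_measurable_comp:
  "bounded_measurable f \<Longrightarrow> g \<in> borel_measurable borel \<Longrightarrow> bounded_measurable (f \<circ> g)"
  unfolding bounded_measurable_def by (auto intro: measurable_comp[of _ _ borel])

lemma integrable_indicator_mult:
  assumes "bounded_measurable f" "S \<in> sets borel" "emeasure lborel S < \<infinity>"
  shows "integrable lborel (\<lambda>x. indicator S x * f x)"
proof -
  obtain B where "\<And>x. \<bar>f x\<bar> \<le> B" "f \<in> borel_measurable borel"
    using assms(1) by (auto simp: bounded_measurable_def)
  then show ?thesis
    using assms(2,3) by (intro integrableI_bounded_set[where A=S and B=B]) (auto simp: indicator_def)
qed

lemma integrable_unit_indicator_mult:
  "bounded_measurable f \<Longrightarrow> integrable lborel (\<lambda>x. indicator {0..1} x * f x)"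
  by (rule integrable_indicator_mult) auto

lemma unit_integral_cong: "(\<And>x. x \<in> {0..1} \<Longrightarrow> f x = g x) \<Longrightarrow> unit_integral f = unit_integral g"
  unfolding unit_integral_def by (rule Bochner_Integration.integral_cong) (auto simp: indicator_def)

lemma unit_integral_add:
  "bounded_measurable f \<Longrightarrow> bounded_measurable g \<Longrightarrow>
    unit_integral (\<lambda>x. f x + g x) = unit_integral f + unit_integral g"
  unfolding unit_integral_def by (simp add: distrib_left integrable_unit_indicator_mult)

lemma unit_integral_diff:
  "bounded_measurable f \<Longrightarrow> bounded_measurable g \<Longrightarrow>
    unit_integral (\<lambda>x. f x - g x) = unit_integral f - unit_integral g"
  unfolding unit_integral_def by (simp add: right_diff_distrib integrable_unit_indicator_mult)

lemma unit_integral_cmult: "unit_integral (\<lambda>x. c * f x) = c * unit_integral f"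
  unfolding unit_integral_def by (simp add: mult.left_commute)

lemma unit_integral_const: "unit_integral (\<lambda>x. c) = c"
  unfolding unit_integral_def by (simp add: content_real)

lemma unit_integral_sum:
  "(\<And>i. i \<in> S \<Longrightarrow> bounded_measurable (f i)) \<Longrightarrow>
    unit_integral (\<lambda>x. \<Sum>i\<in>S. f i x) = (\<Sum>i\<in>S. unit_integral (f i))"
  by (induction S rule: infinite_finite_induct)
    (simp_all add: unit_integral_const unit_integral_add bounded_measurable_sum)

lemma unit_integral_indicator:
  "U \<in> sets borel \<Longrightarrow> unit_integral (indicator U) = measure lborel (U \<inter> {0..1})"
  unfolding unit_integral_def by (simp add: indicator_inter_arith[symmetric] Int_commute)

lemma unit_integral_mono:
  "bounded_measurable f \<Longrightarrow> bounded_measurable g \<Longrightarrow> (\<And>x. x \<in> {0..1} \<Longrightarrow> f x \<le> g x) \<Longrightarrow>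
    unit_integral f \<le> unit_integral g"
  unfolding unit_integral_def
  by (intro integral_mono integrable_unit_indicator_mult) (auto simp: indicator_def)

lemma unit_integral_abs: "\<bar>unit_integral f\<bar> \<le> unit_integral (\<lambda>x. \<bar>f x\<bar>)"
proof -
  have "\<bar>unit_integral f\<bar> \<le> (\<integral>x. \<bar>indicator {0..1} x * f x\<bar> \<partial>lborel)"
    unfolding unit_integral_def by (rule integral_abs_bound)
  also have "\<dots> = unit_integral (\<lambda>x. \<bar>f x\<bar>)"
    unfolding unit_integral_def by (rule Bochner_Integration.integral_cong) (auto simp: indicator_def)
  finally show ?thesis .
qed

lemma unit_integral_abs_le:
  assumes "bounded_measurable f" "\<And>x. x \<in> {0..1} \<Longrightarrow> \<bar>f x\<bar> \<le> c"
  shows "\<bar>unit_integral f\<bar> \<le> c"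
proof -
  have "unit_integral (\<lambda>x. \<bar>f x\<bar>) \<le> unit_integral (\<lambda>_. c)"
    using assms by (intro unit_integral_mono bounded_measurable_abs bounded_measurable_const)
  then show ?thesis
    using unit_integral_abs[of f] by (simp add: unit_integral_const)
qed

lemma unit_integral_abs_diff_le:
  "bounded_measurable f \<Longrightarrow> bounded_measurable g \<Longrightarrow>
    \<bar>unit_integral f - unit_integral g\<bar> \<le> unit_integral (\<lambda>x. \<bar>f x - g x\<bar>)"
  using unit_integral_abs[of "\<lambda>x. f x - g x"] by (simp add: unit_integral_diff)

lemma unit_integral_nonneg: "bounded_measurable f \<Longrightarrow> (\<And>x. x \<in> {0..1} \<Longrightarrow> 0 \<le> f x) \<Longrightarrow> 0 \<le> unit_integral f"
  using unit_integral_mono[of "\<lambda>_. 0" f] by (simp add: unit_integral_const bounded_measurable_const)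

lemma integral_indicator_affine_image:
  assumes "s \<noteq> 0"
  shows "(\<integral>x. indicator ((\<lambda>y. s * y + c) ` {0..1}) x * f x \<partial>lborel) = \<bar>s\<bar> * unit_integral (\<lambda>y. f (s * y + c))"
proof -
  have "indicator ((\<lambda>y. s * y + c) ` {0..1}) (c + s * x) = (indicator {0..1} x :: real)" for x
    using assms by (auto simp: indicator_def image_iff algebra_simps)
  then show ?thesis
    using lborel_integral_real_affine[OF assms,
        of "\<lambda>x. indicator ((\<lambda>y. s * y + c) ` {0..1}) x * f x" c]
    by (simp add: unit_integral_def add.commute)
qed

section \<open>Transfer to cylinders and invariance of Lebesgue measure\<close>

lemma unit_integral_branches:
  assumes a: "0 < a" "a < 1" and f: "bounded_measurable f"
  shows "unit_integral f = a * unit_integral (f \<circ> branch a True) + (1 - a) * unit_integral (f \<circ> branch a False)"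
proof -
  have left: "(\<lambda>y. a * y + 0) ` {0..1} = {0..a}" and right: "(\<lambda>y. (a - 1) * y + 1) ` {0..1} = {a..1}"
    using a by (simp_all add: image_affinity_atLeastAtMost)
  have "(\<integral>x. indicator {0..a} x * f x \<partial>lborel) = a * unit_integral (f \<circ> branch a True)"
    using integral_indicator_affine_image[of a 0 f] a by (simp add: left branch_def comp_def)
  moreover have "(\<integral>x. indicator {a..1} x * f x \<partial>lborel) = (1 - a) * unit_integral (f \<circ> branch a False)"
    using integral_indicator_affine_image[of "a - 1" 1 f] a unfolding right
    by (simp add: branch_def comp_def algebra_simps)
  moreover have "AE x in lborel. indicator {a} x * f x = 0"
    using AE_lborel_singleton[of a] by eventually_elim simp
  then have "(\<integral>x. indicator {a} x * f x \<partial>lborel) = 0"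
    by (rule integral_eq_zero_AE)
  moreover have "indicator {0..1} x * f x = indicator {0..a} x * f x + indicator {a..1} x * f x - indicator {a} x * f x" for x
    using a by (auto simp: indicator_def)
  moreover have "integrable lborel (\<lambda>x. indicator {0..a} x * f x)"
    "integrable lborel (\<lambda>x. indicator {a..1} x * f x)" "integrable lborel (\<lambda>x. indicator {a} x * f x)"
    using f a by (auto intro!: integrable_indicator_mult)
  ultimately show ?thesis
    unfolding unit_integral_def by (simp add: comp_def)
qed

lemma unit_integral_cylinders:
  assumes a: "0 < a" "a < 1"
  shows "bounded_measurable f \<Longrightarrow> unit_integral f = (\<Sum>w\<in>words n. cyl_len a w * unit_integral (f \<circ> cyl_map a w))"
proof (induction n arbitrary: f)
  case 0
  then show ?case by (simp add: words_0)
next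
  case (Suc n)
  have "bounded_measurable (f \<circ> branch a s)" for s
    using Suc.prems by (rule bounded_measurable_comp) simp
  then have "unit_integral (f \<circ> branch a s) = (\<Sum>w\<in>words n. cyl_len a w * unit_integral (f \<circ> branch a s \<circ> cyl_map a w))" for s
    by (rule Suc.IH)
  then show ?case
    using unit_integral_branches[OF a Suc.prems]
    by (simp add: sum_words_Suc sum_distrib_left branch_ratio_def comp_def mult.assoc)
qed

lemma unit_integral_T_funpow:
  assumes a: "0 < a" "a < 1" and f: "bounded_measurable f"
  shows "unit_integral (\<lambda>x. f ((T a ^^ n) x)) = unit_integral f"
proof -
  have "bounded_measurable (f \<circ> (T a ^^ n))"
    using f by (rule bounded_measurable_comp) simp
  then have "unit_integral (f \<circ> (T a ^^ n)) = (\<Sum>w\<in>words n. cyl_len a w * unit_integral (f \<circ> (T a ^^ n) \<circ> cyl_map a w))"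
    by (rule unit_integral_cylinders[OF a])
  also have "\<dots> = (\<Sum>w\<in>words n. cyl_len a w * unit_integral f)"
  proof (rule sum.cong[OF refl])
    fix w
    assume "w \<in> words n"
    then have "unit_integral (f \<circ> (T a ^^ n) \<circ> cyl_map a w) = unit_integral f"
      using T_funpow_cyl_map[OF a] by (intro unit_integral_cong) (auto simp: words_def)
    then show "cyl_len a w * unit_integral (f \<circ> (T a ^^ n) \<circ> cyl_map a w) = cyl_len a w * unit_integral f"
      by simp
  qed
  also have "\<dots> = unit_integral f"
    using sum_cyl_len[OF a] by (simp flip: sum_distrib_right)
  finally show ?thesis
    by (simp add: comp_def)
qed

lemma sum_cyl_len_le_measure:
  assumes a: "0 < a" "a < 1" and U: "U \<in> sets borel"
    and S: "S \<subseteq> words n" "\<And>w. w \<in> S \<Longrightarrow> cylinder a w \<subseteq> U"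
  shows "(\<Sum>w\<in>S. cyl_len a w) \<le> measure lborel (U \<inter> {0..1})"
proof -
  have term_nonneg: "0 \<le> cyl_len a w * unit_integral (indicator U \<circ> cyl_map a w)" for w
    using U cyl_len_nonneg[OF a]
    by (intro mult_nonneg_nonneg unit_integral_nonneg bounded_measurable_comp bounded_measurable_indicator) auto
  have "(\<Sum>w\<in>S. cyl_len a w) = (\<Sum>w\<in>S. cyl_len a w * unit_integral (indicator U \<circ> cyl_map a w))"
  proof (rule sum.cong[OF refl])
    fix w
    assume "w \<in> S"
    then have "unit_integral (indicator U \<circ> cyl_map a w) = unit_integral (\<lambda>_. 1)"
      using S(2)[of w] by (intro unit_integral_cong) (auto simp: cylinder_def indicator_def)
    then show "cyl_len a w = cyl_len a w * unit_integral (indicator U \<circ> cyl_map a w)"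
      by (simp add: unit_integral_const)
  qed
  also have "\<dots> \<le> (\<Sum>w\<in>words n. cyl_len a w * unit_integral (indicator U \<circ> cyl_map a w))"
    using S(1) term_nonneg by (intro sum_mono2) auto
  also have "\<dots> = measure lborel (U \<inter> {0..1})"
    using unit_integral_cylinders[OF a bounded_measurable_indicator[OF U]] unit_integral_indicator[OF U]
    by simp
  finally show ?thesis .
qed

lemma sum_cyl_len_containing_point:
  assumes a: "0 < a" "a < 1" and r: "r > 0"
  shows "(\<Sum>w\<in>{w\<in>words n. cyl_len a w \<le> r \<and> p \<in> cylinder a w}. cyl_len a w) \<le> 2 * r"
proof -
  have "(\<Sum>w\<in>{w\<in>words n. cyl_len a w \<le> r \<and> p \<in> cylinder a w}. cyl_len a w) \<le> measure lborel ({p - r..p + r} \<inter> {0..1})"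
  proof (rule sum_cyl_len_le_measure[OF a])
    fix w
    assume w: "w \<in> {w\<in>words n. cyl_len a w \<le> r \<and> p \<in> cylinder a w}"
    show "cylinder a w \<subseteq> {p - r..p + r}"
      using w cylinder_diam[OF a, of _ w p] by (fastforce simp: abs_le_iff)
  qed auto
  also have "\<dots> \<le> measure lborel {p - r..p + r}"
    using r by (intro measure_mono_fmeasurable) (auto simp: fmeasurable_def ennreal_less_top)
  also have "\<dots> = 2 * r"
    using r by simp
  finally show ?thesis .
qed

section \<open>Entropy and the typical length of cylinders\<close>

definition entropy :: "real \<Rightarrow> real" where
  "entropy a = - (a * ln a + (1 - a) * ln (1 - a))"

text \<open>
  Under the weights \<open>cyl_len a\<close> the letters of a word are independent with probability \<open>a\<close> of
  being \<open>True\<close>; \<open>deviation\<close> is the centred number of \<open>True\<close> letters.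
\<close>

definition deviation :: "real \<Rightarrow> bool list \<Rightarrow> real" where
  "deviation a w = real (length (filter id w)) - real (length w) * a"

definition atypical :: "real \<Rightarrow> real \<Rightarrow> nat \<Rightarrow> bool list set" where
  "atypical a e n = {w \<in> words n. real n * e \<le> \<bar>ln (cyl_len a w) + real n * entropy a\<bar>}"

lemma deviation_Cons: "deviation a (s # w) = deviation a w + ((if s then 1 else 0) - a)"
  by (simp add: deviation_def algebra_simps)

lemma ln_cyl_len:
  assumes a: "0 < a" "a < 1"
  shows "ln (cyl_len a w) + real (length w) * entropy a = deviation a w * (ln a - ln (1 - a))"
proof (induction w)
  case Nil
  then show ?case by (simp add: deviation_def)
next
  case (Cons s w)
  have "ln (cyl_len a (s # w)) = ln (branch_ratio a s) + ln (cyl_len a w)"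
    using a cyl_len_pos[OF a, of w] by (simp add: ln_mult branch_ratio_def)
  with Cons show ?case
    by (cases s) (simp_all add: deviation_Cons branch_ratio_def entropy_def algebra_simps)
qed

lemma sum_cyl_len_deviation_sq:
  assumes a: "0 < a" "a < 1"
  shows "(\<Sum>w\<in>words n. cyl_len a w * (deviation a w)\<^sup>2) = real n * a * (1 - a)"
proof (induction n)
  case 0
  then show ?case by (simp add: words_0 deviation_def)
next
  case (Suc n)
  \<comment> \<open>\<open>a (d + 1 - a)\<^sup>2 + (1 - a) (d - a)\<^sup>2 = d\<^sup>2 + a (1 - a)\<close>\<close>
  have "(\<Sum>w\<in>words (Suc n). cyl_len a w * (deviation a w)\<^sup>2)
      = (\<Sum>w\<in>words n. cyl_len a w * (deviation a w)\<^sup>2 + a * (1 - a) * cyl_len a w)"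
    unfolding sum_words_Suc sum.distrib[symmetric]
    by (rule sum.cong) (simp_all add: deviation_Cons branch_ratio_def power2_eq_square algebra_simps)
  also have "\<dots> = real (Suc n) * a * (1 - a)"
    using Suc by (simp add: sum.distrib sum_cyl_len[OF a] flip: sum_distrib_left) (simp add: algebra_simps)
  finally show ?case .
qed

lemma sum_cyl_len_atypical_le:
  assumes a: "0 < a" "a < 1" and e: "e > 0" and n: "n > 0"
  shows "(\<Sum>w\<in>atypical a e n. cyl_len a w) \<le> a * (1 - a) * (ln a - ln (1 - a))\<^sup>2 / (real n * e\<^sup>2)"
proof -
  define D where "D = (ln a - ln (1 - a))\<^sup>2"
  have "(\<Sum>w\<in>atypical a e n. cyl_len a w) * (real n * e)\<^sup>2 = (\<Sum>w\<in>atypical a e n. cyl_len a w * (real n * e)\<^sup>2)"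
    by (simp add: sum_distrib_right)
  also have "\<dots> \<le> (\<Sum>w\<in>atypical a e n. cyl_len a w * ((deviation a w)\<^sup>2 * D))"
  proof (rule sum_mono)
    fix w
    assume w: "w \<in> atypical a e n"
    then have "real n * e \<le> \<bar>deviation a w * (ln a - ln (1 - a))\<bar>"
      using ln_cyl_len[OF a, of w] by (auto simp: atypical_def words_def)
    then have "(real n * e)\<^sup>2 \<le> (deviation a w)\<^sup>2 * D"
      using e unfolding D_def power_mult_distrib[symmetric] by (metis abs_le_square_iff abs_of_nonneg mult_nonneg_nonneg of_nat_0_le_iff order_less_imp_le)
    then show "cyl_len a w * (real n * e)\<^sup>2 \<le> cyl_len a w * ((deviation a w)\<^sup>2 * D)"
      by (simp add: mult_left_mono cyl_len_nonneg[OF a])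
  qed
  also have "\<dots> \<le> (\<Sum>w\<in>words n. cyl_len a w * ((deviation a w)\<^sup>2 * D))"
    using cyl_len_nonneg[OF a] by (intro sum_mono2) (auto simp: atypical_def D_def)
  also have "\<dots> = (\<Sum>w\<in>words n. cyl_len a w * (deviation a w)\<^sup>2) * D"
    by (simp add: sum_distrib_right mult.assoc)
  also have "\<dots> = real n * a * (1 - a) * D"
    by (simp add: sum_cyl_len_deviation_sq[OF a])
  finally have "(\<Sum>w\<in>atypical a e n. cyl_len a w) * (real n * e)\<^sup>2 \<le> real n * a * (1 - a) * D" .
  then show ?thesis
    using e n by (simp add: D_def pos_le_divide_eq power2_eq_square) (simp add: field_simps)
qed

lemma sum_cyl_len_atypical_tendsto_0:
  assumes a: "0 < a" "a < 1" and e: "e > 0"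
  shows "(\<lambda>n. \<Sum>w\<in>atypical a e n. cyl_len a w) \<longlonglongrightarrow> 0"
proof (rule tendsto_sandwich[OF _ _ tendsto_const lim_const_over_n])
  show "\<forall>\<^sub>F n in sequentially. 0 \<le> (\<Sum>w\<in>atypical a e n. cyl_len a w)"
    using cyl_len_nonneg[OF a] by (intro always_eventually allI sum_nonneg) simp
  show "\<forall>\<^sub>F n in sequentially. (\<Sum>w\<in>atypical a e n. cyl_len a w) \<le> (a * (1 - a) * (ln a - ln (1 - a))\<^sup>2 / e\<^sup>2) / real n"
    using eventually_gt_at_top[of 0]
  proof eventually_elim
    case (elim n)
    then show ?case
      using sum_cyl_len_atypical_le[OF a e elim] by (simp add: field_simps)
  qed
qed

lemma finite_atypical [simp]: "finite (atypical a e n)"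
  by (rule finite_subset[of _ "words n"]) (auto simp: atypical_def)

lemma long_cylinder_atypical:
  assumes a: "0 < a" "a < 1" and w: "w \<in> words n" and l: "exp (- real n * (entropy a - e)) < cyl_len a w"
  shows "w \<in> atypical a e n"
proof -
  have "- real n * (entropy a - e) < ln (cyl_len a w)"
    using l cyl_len_pos[OF a, of w] by (metis ln_less_cancel_iff exp_gt_zero ln_exp)
  then show ?thesis
    using w by (auto simp: atypical_def algebra_simps)
qed

lemma short_cylinder_atypical:
  assumes a: "0 < a" "a < 1" and w: "w \<in> words n" and l: "cyl_len a w < exp (- real n * (entropy a + e))"
  shows "w \<in> atypical a e n"
proof -
  have "ln (cyl_len a w) < - real n * (entropy a + e)"
    using l cyl_len_pos[OF a, of w] by (metis ln_less_cancel_iff exp_gt_zero ln_exp)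
  then show ?thesis
    using w by (auto simp: atypical_def algebra_simps)
qed

lemma entropy_one_minus: "entropy (1 - a) = entropy a"
  by (simp add: entropy_def algebra_simps)

lemma entropy_has_real_derivative:
  assumes "0 < t" "t < 1"
  shows "(entropy has_real_derivative (ln (1 - t) - ln t)) (at t)"
proof -
  have "((\<lambda>t. - (t * ln t + (1 - t) * ln (1 - t))) has_real_derivative
          - ((1 * ln t + t * (1 / t)) + ((- 1) * ln (1 - t) + (1 - t) * ((- 1) / (1 - t))))) (at t)"
    using assms by (auto intro!: derivative_eq_intros)
  moreover have "- ((1 * ln t + t * (1 / t)) + ((- 1) * ln (1 - t) + (1 - t) * ((- 1) / (1 - t)))) = ln (1 - t) - ln t"
    using assms by (simp add: field_simps)
  ultimately show ?thesis
    unfolding entropy_def[abs_def] by simp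
qed

lemma entropy_strict_mono:
  assumes "0 < x" "x < y" "y \<le> 1/2"
  shows "entropy x < entropy y"
proof (rule DERIV_pos_imp_increasing_open[OF assms(2)])
  fix t
  assume t: "x < t" "t < y"
  have "ln t < ln (1 - t)"
    using t assms by (subst ln_less_cancel_iff) auto
  then show "\<exists>d. (entropy has_real_derivative d) (at t) \<and> 0 < d"
    using entropy_has_real_derivative[of t] t assms by auto
next
  have "\<forall>t\<in>{x..y}. isCont entropy t"
    using assms by (auto intro!: DERIV_isCont entropy_has_real_derivative)
  then show "continuous_on {x..y} entropy"
    by (intro continuous_at_imp_continuous_on) auto
qed

lemma entropy_eq_imp:
  assumes a: "0 < a" "a < 1" and b: "0 < b" "b < 1" and eq: "entropy a = entropy b"
  shows "a = b \<or> a = 1 - b"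
proof -
  define a' where "a' = min a (1 - a)"
  define b' where "b' = min b (1 - b)"
  have "entropy a' = entropy b'"
    using eq by (auto simp: a'_def b'_def min_def entropy_one_minus)
  moreover have "0 < a'" "a' \<le> 1/2" "0 < b'" "b' \<le> 1/2"
    using a b by (auto simp: a'_def b'_def min_def)
  ultimately have "a' = b'"
    using entropy_strict_mono[of a' b'] entropy_strict_mono[of b' a'] by (cases a' b' rule: linorder_cases) auto
  then show ?thesis
    by (auto simp: a'_def b'_def min_def split: if_splits)
qed

section \<open>Short cylinders of one map inside long cylinders of another\<close>

lemma sum_Un_le:
  fixes f :: "'a \<Rightarrow> real"
  assumes "finite A" "finite B" "\<And>x. 0 \<le> f x"
  shows "sum f (A \<union> B) \<le> sum f A + sum f B"
  using sum_Un[OF assms(1,2), of f] sum_nonneg[of "A \<inter> B" f] assms(3) by simp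

lemma sum_UN_le:
  fixes f :: "'a \<Rightarrow> real"
  assumes "finite K" "\<And>i. i \<in> K \<Longrightarrow> finite (A i)" "\<And>x. 0 \<le> f x"
  shows "sum f (\<Union>i\<in>K. A i) \<le> (\<Sum>i\<in>K. sum f (A i))"
  using assms
proof (induction K rule: finite_induct)
  case (insert i K)
  then have "sum f (\<Union>j\<in>insert i K. A j) \<le> sum f (A i) + sum f (\<Union>j\<in>K. A j)"
    by (simp add: sum_Un_le)
  with insert show ?case
    by simp
qed simp

\<comment> \<open>on such a cylinder \<open>T b ^^ n\<close> is affine with slope at most \<open>1 / s\<close>\<close>
definition nested :: "real \<Rightarrow> real \<Rightarrow> nat \<Rightarrow> real \<Rightarrow> real \<Rightarrow> bool list \<Rightarrow> bool" where
  "nested a b n r s w \<longleftrightarrow> cyl_len a w \<le> r \<and> (\<exists>v\<in>words n. s \<le> cyl_len b v \<and> cylinder a w \<subseteq> cylinder b v)"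

lemma card_long_cylinders_le:
  assumes b: "0 < b" "b < 1" and s: "s > 0"
  shows "real (card {v\<in>words n. s \<le> cyl_len b v}) \<le> 1 / s"
proof -
  have "real (card {v\<in>words n. s \<le> cyl_len b v}) * s \<le> (\<Sum>v\<in>{v\<in>words n. s \<le> cyl_len b v}. cyl_len b v)"
    using sum_mono[of "{v\<in>words n. s \<le> cyl_len b v}" "\<lambda>_. s" "cyl_len b"] by simp
  also have "\<dots> \<le> (\<Sum>v\<in>words n. cyl_len b v)"
    using cyl_len_nonneg[OF b] by (intro sum_mono2) auto
  finally show ?thesis
    using s sum_cyl_len[OF b] by (simp add: field_simps)
qed

lemma cylinder_not_nested_hits_endpoint:
  assumes a: "0 < a" "a < 1" and b: "0 < b" "b < 1"
    and w: "w \<in> words n" "cyl_len a w \<le> r" "\<not> nested a b n r s w"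
    and not_short: "\<not> cylinder a w \<subseteq> (\<Union>v\<in>{v\<in>words n. cyl_len b v < s}. cylinder b v)"
  shows "\<exists>v\<in>words n. s \<le> cyl_len b v \<and>
    (Inf (cylinder b v) \<in> cylinder a w \<or> Sup (cylinder b v) \<in> cylinder a w)"
proof -
  obtain x where x: "x \<in> cylinder a w" "x \<notin> (\<Union>v\<in>{v\<in>words n. cyl_len b v < s}. cylinder b v)"
    using not_short by blast
  obtain v where v: "v \<in> words n" "x \<in> cylinder b v"
    using cylinders_cover[OF b] cylinder_subset_unit[OF a] x(1) by blast
  have "v \<notin> {v\<in>words n. cyl_len b v < s}"
    using v(2) x(2) by blast
  then have long: "s \<le> cyl_len b v"
    using v(1) by simp
  then obtain y where y: "y \<in> cylinder a w" "y \<notin> cylinder b v"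
    using w v unfolding nested_def by blast
  obtain l l' where l: "cylinder a w = {l..l + cyl_len a w}" and l': "cylinder b v = {l'..l' + cyl_len b v}"
    using cylinder_eq_interval[OF a] cylinder_eq_interval[OF b] by metis
  \<comment> \<open>two intervals that meet without being nested: one contains an endpoint of the other\<close>
  have "l' \<in> cylinder a w \<or> l' + cyl_len b v \<in> cylinder a w"
    using x(1) v(2) y unfolding l l' by auto
  moreover have "Inf (cylinder b v) = l'" "Sup (cylinder b v) = l' + cyl_len b v"
    using l' cyl_len_pos[OF b, of v] by simp_all
  ultimately show ?thesis
    using v(1) long by metis
qed

lemma sum_cyl_len_inside_union_le:
  assumes a: "0 < a" "a < 1" and b: "0 < b" "b < 1" and S: "S \<subseteq> words n"
  shows "(\<Sum>w\<in>{w\<in>words n. cylinder a w \<subseteq> (\<Union>v\<in>S. cylinder b v)}. cyl_len a w) \<le> (\<Sum>v\<in>S. cyl_len b v)"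
proof -
  define U where "U = (\<Union>v\<in>S. cylinder b v)"
  have fin: "finite S"
    using S by (rule finite_subset) simp
  then have U_borel: "U \<in> sets borel"
    using cylinder_borel[OF b] by (auto simp: U_def)
  have "(\<Sum>w\<in>{w\<in>words n. cylinder a w \<subseteq> U}. cyl_len a w) \<le> measure lborel (U \<inter> {0..1})"
    by (rule sum_cyl_len_le_measure[OF a U_borel, of _ n]) blast+
  also have "U \<inter> {0..1} = U"
    using cylinder_subset_unit[OF b] by (auto simp: U_def)
  also have "measure lborel U \<le> (\<Sum>v\<in>S. measure lborel (cylinder b v))"
    unfolding U_def using fin cylinder_borel[OF b] by (intro measure_UNION_le) auto
  finally show ?thesis
    by (simp add: U_def measure_cylinder[OF b])
qed

lemma sum_cyl_len_not_nested_le: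
  assumes a: "0 < a" "a < 1" and b: "0 < b" "b < 1" and r: "r > 0"
  shows "(\<Sum>w\<in>{w\<in>words n. \<not> nested a b n r s w}. cyl_len a w)
     \<le> (\<Sum>w\<in>{w\<in>words n. r < cyl_len a w}. cyl_len a w) + (\<Sum>v\<in>{v\<in>words n. cyl_len b v < s}. cyl_len b v)
        + 4 * r * real (card {v\<in>words n. s \<le> cyl_len b v})"
proof -
  define Long where "Long = {w\<in>words n. r < cyl_len a w}"
  define Short where "Short = {v\<in>words n. cyl_len b v < s}"
  define N where "N = {v\<in>words n. s \<le> cyl_len b v}"
  define U where "U = (\<Union>v\<in>Short. cylinder b v)"
  define Inside where "Inside = {w\<in>words n. cylinder a w \<subseteq> U}"
  define Hit where "Hit = (\<lambda>p. {w\<in>words n. cyl_len a w \<le> r \<and> p \<in> cylinder a w})"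
  define Boundary where "Boundary = (\<Union>v\<in>N. Hit (Inf (cylinder b v)) \<union> Hit (Sup (cylinder b v)))"
  have fin: "finite Short" "finite N" "finite Long" "finite Inside" "\<And>p. finite (Hit p)" "finite Boundary"
    by (auto simp: Short_def N_def Long_def Inside_def Hit_def Boundary_def)
  have "{w\<in>words n. \<not> nested a b n r s w} \<subseteq> Long \<union> Inside \<union> Boundary"
  proof
    fix w
    assume w: "w \<in> {w\<in>words n. \<not> nested a b n r s w}"
    show "w \<in> Long \<union> Inside \<union> Boundary"
    proof (cases "r < cyl_len a w \<or> cylinder a w \<subseteq> U")
      case False
      then obtain v where "v \<in> N" "Inf (cylinder b v) \<in> cylinder a w \<or> Sup (cylinder b v) \<in> cylinder a w"
        using w cylinder_not_nested_hits_endpoint[OF a b, of w n r s] by (auto simp: N_def U_def Short_def)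
      moreover have "w \<in> words n" "cyl_len a w \<le> r"
        using w False by auto
      ultimately have "w \<in> Boundary"
        unfolding Boundary_def Hit_def by blast
      then show ?thesis
        by blast
    qed (use w in \<open>auto simp: Long_def Inside_def\<close>)
  qed
  then have "(\<Sum>w\<in>{w\<in>words n. \<not> nested a b n r s w}. cyl_len a w) \<le> (\<Sum>w\<in>Long \<union> Inside \<union> Boundary. cyl_len a w)"
    using fin cyl_len_nonneg[OF a] by (intro sum_mono2) auto
  also have "\<dots> \<le> (\<Sum>w\<in>Long. cyl_len a w) + (\<Sum>w\<in>Inside. cyl_len a w) + (\<Sum>w\<in>Boundary. cyl_len a w)"
    using fin cyl_len_nonneg[OF a] sum_Un_le[of "Long \<union> Inside" Boundary "cyl_len a"]
      sum_Un_le[of Long Inside "cyl_len a"]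
    by simp
  finally have total: "(\<Sum>w\<in>{w\<in>words n. \<not> nested a b n r s w}. cyl_len a w)
      \<le> (\<Sum>w\<in>Long. cyl_len a w) + (\<Sum>w\<in>Inside. cyl_len a w) + (\<Sum>w\<in>Boundary. cyl_len a w)" .
  have inside: "(\<Sum>w\<in>Inside. cyl_len a w) \<le> (\<Sum>v\<in>Short. cyl_len b v)"
    unfolding Inside_def U_def by (rule sum_cyl_len_inside_union_le[OF a b]) (auto simp: Short_def)
  have boundary: "(\<Sum>w\<in>Boundary. cyl_len a w) \<le> 4 * r * real (card N)"
  proof -
    have "(\<Sum>w\<in>Boundary. cyl_len a w) \<le> (\<Sum>v\<in>N. sum (cyl_len a) (Hit (Inf (cylinder b v)) \<union> Hit (Sup (cylinder b v))))"
      unfolding Boundary_def using fin cyl_len_nonneg[OF a] by (intro sum_UN_le) auto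
    also have "\<dots> \<le> (\<Sum>v\<in>N. sum (cyl_len a) (Hit (Inf (cylinder b v))) + sum (cyl_len a) (Hit (Sup (cylinder b v))))"
      using fin cyl_len_nonneg[OF a] by (intro sum_mono sum_Un_le) auto
    also have "\<dots> \<le> (\<Sum>v\<in>N. 2 * r + 2 * r)"
      unfolding Hit_def by (intro sum_mono add_mono sum_cyl_len_containing_point[OF a r])
    finally show ?thesis
      by (simp add: mult.commute)
  qed
  from total inside boundary show ?thesis
    unfolding Long_def Short_def N_def by linarith
qed

lemma exp_neg_mult_tendsto_0: "c > 0 \<Longrightarrow> (\<lambda>n. exp (- c * real n)) \<longlonglongrightarrow> 0"
  using LIMSEQ_power_zero[of "exp (- c)"] by (simp add: exp_of_nat_mult[symmetric] mult.commute)

\<comment> \<open>typical \<open>a\<close>-cylinders of rank \<open>n\<close> have length about \<open>exp (- n entropy a)\<close>\<close>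
definition short_scale :: "real \<Rightarrow> real \<Rightarrow> nat \<Rightarrow> real" where
  "short_scale a e n = exp (- real n * (entropy a - e))"

definition long_scale :: "real \<Rightarrow> real \<Rightarrow> nat \<Rightarrow> real" where
  "long_scale b e n = exp (- real n * (entropy b + e))"

context
  fixes a b e :: real
  assumes a: "0 < a" "a < 1" and b: "0 < b" "b < 1"
    and e: "0 < e" "2 * e < entropy a - entropy b"
begin

lemma scale_ratio_tendsto_0: "(\<lambda>n. short_scale a e n / long_scale b e n) \<longlonglongrightarrow> 0"
proof -
  have "short_scale a e n / long_scale b e n = exp (- (entropy a - entropy b - 2 * e) * real n)" for n
    by (simp add: short_scale_def long_scale_def flip: exp_diff) (simp add: algebra_simps)
  then show ?thesis
    using exp_neg_mult_tendsto_0[of "entropy a - entropy b - 2 * e"] e by simp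
qed

lemma sum_cyl_len_not_nested_tendsto_0:
  "(\<lambda>n. \<Sum>w\<in>{w\<in>words n. \<not> nested a b n (short_scale a e n) (long_scale b e n) w}. cyl_len a w) \<longlonglongrightarrow> 0"
proof (rule tendsto_sandwich[OF _ _ tendsto_const])
  define bound where "bound n = (\<Sum>w\<in>atypical a e n. cyl_len a w) + (\<Sum>v\<in>atypical b e n. cyl_len b v)
    + 4 * (short_scale a e n / long_scale b e n)" for n
  show "\<forall>\<^sub>F n in sequentially. 0 \<le> (\<Sum>w\<in>{w\<in>words n. \<not> nested a b n (short_scale a e n) (long_scale b e n) w}. cyl_len a w)"
    using cyl_len_nonneg[OF a] by (intro always_eventually allI sum_nonneg) auto
  have "(\<Sum>w\<in>{w\<in>words n. \<not> nested a b n (short_scale a e n) (long_scale b e n) w}. cyl_len a w) \<le> bound n" for n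
  proof -
    have pos: "0 < short_scale a e n" "0 < long_scale b e n"
      by (simp_all add: short_scale_def long_scale_def)
    have "(\<Sum>w\<in>{w\<in>words n. short_scale a e n < cyl_len a w}. cyl_len a w) \<le> (\<Sum>w\<in>atypical a e n. cyl_len a w)"
      using cyl_len_nonneg[OF a] long_cylinder_atypical[OF a] by (intro sum_mono2) (auto simp: short_scale_def)
    moreover have "(\<Sum>v\<in>{v\<in>words n. cyl_len b v < long_scale b e n}. cyl_len b v) \<le> (\<Sum>v\<in>atypical b e n. cyl_len b v)"
      using cyl_len_nonneg[OF b] short_cylinder_atypical[OF b] by (intro sum_mono2) (auto simp: long_scale_def)
    moreover have "4 * short_scale a e n * real (card {v\<in>words n. long_scale b e n \<le> cyl_len b v})
        \<le> 4 * (short_scale a e n / long_scale b e n)"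
      using card_long_cylinders_le[OF b pos(2), of n] pos by (simp add: field_simps)
    ultimately show ?thesis
      using sum_cyl_len_not_nested_le[OF a b pos(1), of n "long_scale b e n"] by (simp add: bound_def)
  qed
  then show "\<forall>\<^sub>F n in sequentially. (\<Sum>w\<in>{w\<in>words n. \<not> nested a b n (short_scale a e n) (long_scale b e n) w}. cyl_len a w) \<le> bound n"
    by simp
  have "entropy b < entropy a"
    using e by simp
  then show "bound \<longlonglongrightarrow> 0"
    unfolding bound_def using e scale_ratio_tendsto_0
    by (intro tendsto_add_zero tendsto_mult_right_zero sum_cyl_len_atypical_tendsto_0 a b) auto
qed

end

lemma T_funpow_oscillation_on_cylinders:
  assumes a: "0 < a" "a < 1" and b: "0 < b" "b < 1" and ent: "entropy b < entropy a"
  shows "\<exists>\<beta>. (\<forall>n w. 0 \<le> \<beta> n w) \<and>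
    (\<forall>n w x x'. w \<in> words n \<longrightarrow> x \<in> cylinder a w \<longrightarrow> x' \<in> cylinder a w \<longrightarrow>
      min 1 \<bar>(T b ^^ n) x - (T b ^^ n) x'\<bar> \<le> \<beta> n w) \<and>
    (\<lambda>n. \<Sum>w\<in>words n. cyl_len a w * \<beta> n w) \<longlonglongrightarrow> 0"
proof -
  define e where "e = (entropy a - entropy b) / 4"
  have e: "0 < e" "2 * e < entropy a - entropy b"
    using ent by (simp_all add: e_def)
  define r where "r = short_scale a e"
  define s where "s = long_scale b e"
  have pos: "0 < r n" "0 < s n" for n
    by (simp_all add: r_def s_def short_scale_def long_scale_def)
  define \<beta> where "\<beta> n w = (if nested a b n (r n) (s n) w then r n / s n else 1)" for n w
  have "min 1 \<bar>(T b ^^ n) x - (T b ^^ n) x'\<bar> \<le> \<beta> n w"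
    if x: "x \<in> cylinder a w" "x' \<in> cylinder a w" for n w x x'
  proof (cases "nested a b n (r n) (s n) w")
    case True
    then obtain v where v: "v \<in> words n" "s n \<le> cyl_len b v" "cylinder a w \<subseteq> cylinder b v"
      and short: "cyl_len a w \<le> r n"
      by (auto simp: nested_def)
    have "\<bar>(T b ^^ n) x - (T b ^^ n) x'\<bar> = \<bar>x - x'\<bar> / cyl_len b v"
      using T_funpow_expands_cylinder[OF b, of x v x'] x v by (auto simp: words_def)
    also have "\<dots> \<le> r n / s n"
      using cylinder_diam[OF a x] short v(2) cyl_len_pos[OF b, of v] pos[of n]
      by (intro frac_le) auto
    finally show ?thesis
      using True by (simp add: \<beta>_def min.coboundedI2)
  qed (simp add: \<beta>_def)
  moreover have "(\<lambda>n. \<Sum>w\<in>words n. cyl_len a w * \<beta> n w) \<longlonglongrightarrow> 0"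
  proof (rule tendsto_sandwich[OF _ _ tendsto_const])
    show "\<forall>\<^sub>F n in sequentially. 0 \<le> (\<Sum>w\<in>words n. cyl_len a w * \<beta> n w)"
      using cyl_len_nonneg[OF a] pos by (intro always_eventually allI sum_nonneg) (simp add: \<beta>_def less_imp_le)
    have "(\<Sum>w\<in>words n. cyl_len a w * \<beta> n w)
        \<le> r n / s n + (\<Sum>w\<in>{w\<in>words n. \<not> nested a b n (r n) (s n) w}. cyl_len a w)" for n
    proof -
      have "(\<Sum>w\<in>words n. cyl_len a w * \<beta> n w)
          \<le> (\<Sum>w\<in>words n. r n / s n * cyl_len a w + (if \<not> nested a b n (r n) (s n) w then cyl_len a w else 0))"
        using cyl_len_nonneg[OF a] pos by (intro sum_mono) (auto simp: \<beta>_def less_imp_le mult.commute)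
      also have "\<dots> = r n / s n + (\<Sum>w\<in>{w\<in>words n. \<not> nested a b n (r n) (s n) w}. cyl_len a w)"
        by (simp only: sum.distrib sum.inter_filter[OF finite_words, symmetric] sum_cyl_len[OF a]
            flip: sum_distrib_left)
      finally show ?thesis .
    qed
    then show "\<forall>\<^sub>F n in sequentially. (\<Sum>w\<in>words n. cyl_len a w * \<beta> n w)
        \<le> r n / s n + (\<Sum>w\<in>{w\<in>words n. \<not> nested a b n (r n) (s n) w}. cyl_len a w)"
      by simp
    show "(\<lambda>n. r n / s n + (\<Sum>w\<in>{w\<in>words n. \<not> nested a b n (r n) (s n) w}. cyl_len a w)) \<longlonglongrightarrow> 0"
      unfolding r_def s_def
      using scale_ratio_tendsto_0[OF a b e] sum_cyl_len_not_nested_tendsto_0[OF a b e]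
      by (rule tendsto_add_zero)
  qed
  moreover have "0 \<le> \<beta> n w" for n w
    using pos[of n] by (simp add: \<beta>_def)
  ultimately show ?thesis
    by blast
qed

section \<open>Decorrelation of the fastest map from Lipschitz observables\<close>

lemma abs_mult_prod_diff_le:
  fixes p q :: "'i \<Rightarrow> real"
  assumes "\<bar>p0\<bar> \<le> 1" "\<bar>q0\<bar> \<le> 1" "\<And>i. i \<in> I \<Longrightarrow> \<bar>p i\<bar> \<le> 1" "\<And>i. i \<in> I \<Longrightarrow> \<bar>q i\<bar> \<le> 1"
  shows "\<bar>p0 * (\<Prod>i\<in>I. p i) - q0 * (\<Prod>i\<in>I. q i)\<bar> \<le> \<bar>p0 - q0\<bar> + (\<Sum>i\<in>I. \<bar>p i - q i\<bar>)"
proof -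
  have P: "\<bar>\<Prod>i\<in>I. p i\<bar> \<le> 1"
    using assms(3) by (simp add: abs_prod prod_le_1)
  have "\<bar>p0 * (\<Prod>i\<in>I. p i) - q0 * (\<Prod>i\<in>I. q i)\<bar>
      = \<bar>(p0 - q0) * (\<Prod>i\<in>I. p i) + q0 * ((\<Prod>i\<in>I. p i) - (\<Prod>i\<in>I. q i))\<bar>"
    by (simp add: algebra_simps)
  also have "\<dots> \<le> \<bar>p0 - q0\<bar> * \<bar>\<Prod>i\<in>I. p i\<bar> + \<bar>q0\<bar> * \<bar>(\<Prod>i\<in>I. p i) - (\<Prod>i\<in>I. q i)\<bar>"
    unfolding abs_mult[symmetric] by (rule abs_triangle_ineq)
  also have "\<dots> \<le> \<bar>p0 - q0\<bar> * 1 + 1 * (\<Sum>i\<in>I. \<bar>p i - q i\<bar>)"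
    using assms P norm_prod_diff[of I p q] by (intro add_mono mult_mono) auto
  finally show ?thesis
    by simp
qed

lemma lipschitz_bounded_diff_le:
  assumes "L-lipschitz_on UNIV g" "\<And>x. \<bar>g x\<bar> \<le> 1"
  shows "\<bar>g x - g y\<bar> \<le> (2 + L) * min 1 \<bar>x - y\<bar>"
proof (cases "\<bar>x - y\<bar> \<le> 1")
  case True
  have "\<bar>g x - g y\<bar> \<le> L * \<bar>x - y\<bar>"
    using lipschitz_onD[OF assms(1)] by (simp add: dist_real_def)
  also have "\<dots> \<le> (2 + L) * \<bar>x - y\<bar>"
    by (simp add: mult_right_mono)
  finally show ?thesis
    using True by simp
next
  case False
  have "\<bar>g x - g y\<bar> \<le> 2"
    using assms(2)[of x] assms(2)[of y] by simp
  then show ?thesis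
    using False lipschitz_on_nonneg[OF assms(1)] by simp
qed

lemma lipschitz_bounded_measurable:
  "L-lipschitz_on UNIV g \<Longrightarrow> (\<And>x. \<bar>g x\<bar> \<le> 1) \<Longrightarrow> bounded_measurable g"
  by (intro bounded_measurableI borel_measurable_continuous_onI lipschitz_on_continuous_on)

lemma oscillation_product_le:
  fixes g0 :: "real \<Rightarrow> real" and g f :: "'i \<Rightarrow> real \<Rightarrow> real"
  assumes g0: "L-lipschitz_on UNIV g0" "\<And>x. \<bar>g0 x\<bar> \<le> 1"
    and g: "\<And>i. i \<in> B \<Longrightarrow> L-lipschitz_on UNIV (g i)" "\<And>i x. i \<in> B \<Longrightarrow> \<bar>g i x\<bar> \<le> 1"
  shows "\<bar>g0 x * (\<Prod>i\<in>B. g i (f i x)) - g0 x' * (\<Prod>i\<in>B. g i (f i x'))\<bar>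
    \<le> L * \<bar>x - x'\<bar> + (2 + L) * (\<Sum>i\<in>B. min 1 \<bar>f i x - f i x'\<bar>)"
proof -
  have "\<bar>g0 x * (\<Prod>i\<in>B. g i (f i x)) - g0 x' * (\<Prod>i\<in>B. g i (f i x'))\<bar>
      \<le> \<bar>g0 x - g0 x'\<bar> + (\<Sum>i\<in>B. \<bar>g i (f i x) - g i (f i x')\<bar>)"
    using g0(2) g(2) by (intro abs_mult_prod_diff_le) auto
  moreover have "(\<Sum>i\<in>B. \<bar>g i (f i x) - g i (f i x')\<bar>) \<le> (\<Sum>i\<in>B. (2 + L) * min 1 \<bar>f i x - f i x'\<bar>)"
    using g by (intro sum_mono lipschitz_bounded_diff_le) auto
  moreover have "\<bar>g0 x - g0 x'\<bar> \<le> L * \<bar>x - x'\<bar>"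
    using lipschitz_onD[OF g0(1)] by (simp add: dist_real_def)
  ultimately show ?thesis
    by (simp add: sum_distrib_left)
qed

lemma unit_integral_mult_near_const:
  assumes H: "bounded_measurable H" and F: "bounded_measurable F" "\<And>x. \<bar>F x\<bar> \<le> 1"
    and \<delta>: "\<And>y. y \<in> {0..1} \<Longrightarrow> \<bar>H y - H 0\<bar> \<le> \<delta>"
  shows "\<bar>unit_integral (\<lambda>y. H y * F y) - unit_integral F * unit_integral H\<bar> \<le> 2 * \<delta>"
proof -
  define D where "D y = H y - H 0" for y
  have D: "bounded_measurable D"
    unfolding D_def using H by (intro bounded_measurable_diff bounded_measurable_const)
  have DF: "bounded_measurable (\<lambda>y. D y * F y)"
    using D F(1) by (rule bounded_measurable_mult)
  have "unit_integral (\<lambda>y. H y * F y) = unit_integral (\<lambda>y. D y * F y + H 0 * F y)"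
    by (simp add: D_def algebra_simps)
  also have "\<dots> = unit_integral (\<lambda>y. D y * F y) + H 0 * unit_integral F"
    using DF F by (simp add: unit_integral_add unit_integral_cmult bounded_measurable_mult bounded_measurable_const)
  finally have HF: "unit_integral (\<lambda>y. H y * F y) = unit_integral (\<lambda>y. D y * F y) + H 0 * unit_integral F" .
  have "unit_integral H = unit_integral (\<lambda>y. D y + H 0)"
    by (simp add: D_def)
  also have "\<dots> = unit_integral D + H 0"
    using D by (simp add: unit_integral_add unit_integral_const bounded_measurable_const)
  \<comment> \<open>subtracting the constant \<open>H 0\<close> from \<open>H\<close> does not change the covariance\<close>
  finally have shift: "unit_integral (\<lambda>y. H y * F y) - unit_integral F * unit_integral H
      = unit_integral (\<lambda>y. D y * F y) - unit_integral F * unit_integral D"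
    using HF by (simp add: algebra_simps)
  have DF_le: "\<bar>D y * F y\<bar> \<le> \<delta>" if "y \<in> {0..1}" for y
  proof -
    have "\<bar>D y\<bar> * \<bar>F y\<bar> \<le> \<delta> * 1"
      using \<delta>[OF that] F(2)[of y] by (intro mult_mono) (auto simp: D_def)
    then show ?thesis
      by (simp add: abs_mult)
  qed
  have "\<bar>unit_integral (\<lambda>y. D y * F y) - unit_integral F * unit_integral D\<bar>
      \<le> \<bar>unit_integral (\<lambda>y. D y * F y)\<bar> + \<bar>unit_integral F\<bar> * \<bar>unit_integral D\<bar>"
    unfolding abs_mult[symmetric] by (rule abs_triangle_ineq4)
  also have "\<dots> \<le> \<delta> + 1 * \<delta>"
    using DF DF_le D \<delta> F by (intro add_mono mult_mono unit_integral_abs_le) (auto simp: D_def)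
  finally show ?thesis
    using shift by simp
qed

lemma decorrelation_on_cylinders:
  assumes a: "0 < a" "a < 1" and G: "bounded_measurable G" and F: "bounded_measurable F" "\<And>x. \<bar>F x\<bar> \<le> 1"
    and \<delta>: "\<And>w y. w \<in> words n \<Longrightarrow> y \<in> {0..1} \<Longrightarrow> \<bar>G (cyl_map a w y) - G (cyl_map a w 0)\<bar> \<le> \<delta> w"
  shows "\<bar>unit_integral (\<lambda>x. G x * F ((T a ^^ n) x)) - unit_integral F * unit_integral G\<bar>
    \<le> 2 * (\<Sum>w\<in>words n. cyl_len a w * \<delta> w)"
proof -
  define X where "X w = unit_integral (\<lambda>y. G (cyl_map a w y) * F y)" for w
  define Y where "Y w = unit_integral F * unit_integral (G \<circ> cyl_map a w)" for w
  have GF: "bounded_measurable (\<lambda>x. G x * F ((T a ^^ n) x))"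
    using G bounded_measurable_comp[OF F(1), of "T a ^^ n"]
    by (intro bounded_measurable_mult) (auto simp: comp_def)
  have "unit_integral (\<lambda>x. G x * F ((T a ^^ n) x))
      = (\<Sum>w\<in>words n. cyl_len a w * unit_integral ((\<lambda>x. G x * F ((T a ^^ n) x)) \<circ> cyl_map a w))"
    using GF by (rule unit_integral_cylinders[OF a])
  also have "\<dots> = (\<Sum>w\<in>words n. cyl_len a w * X w)"
  proof (rule sum.cong[OF refl])
    fix w
    assume "w \<in> words n"
    then have "unit_integral ((\<lambda>x. G x * F ((T a ^^ n) x)) \<circ> cyl_map a w) = X w"
      unfolding X_def using T_funpow_cyl_map[OF a] by (intro unit_integral_cong) (auto simp: words_def)
    then show "cyl_len a w * unit_integral ((\<lambda>x. G x * F ((T a ^^ n) x)) \<circ> cyl_map a w) = cyl_len a w * X w"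
      by simp
  qed
  finally have "unit_integral (\<lambda>x. G x * F ((T a ^^ n) x)) = (\<Sum>w\<in>words n. cyl_len a w * X w)" .
  moreover have "unit_integral F * unit_integral G = (\<Sum>w\<in>words n. cyl_len a w * Y w)"
    unfolding Y_def unit_integral_cylinders[OF a G, of n] by (simp add: sum_distrib_left mult_ac)
  ultimately have "\<bar>unit_integral (\<lambda>x. G x * F ((T a ^^ n) x)) - unit_integral F * unit_integral G\<bar>
      = \<bar>\<Sum>w\<in>words n. cyl_len a w * (X w - Y w)\<bar>"
    by (simp add: right_diff_distrib sum_subtractf)
  also have "\<dots> \<le> (\<Sum>w\<in>words n. cyl_len a w * \<bar>X w - Y w\<bar>)"
    using sum_abs[of "\<lambda>w. cyl_len a w * (X w - Y w)"] cyl_len_nonneg[OF a] by (simp add: abs_mult)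
  also have "\<dots> \<le> (\<Sum>w\<in>words n. cyl_len a w * (2 * \<delta> w))"
  proof (intro sum_mono mult_left_mono cyl_len_nonneg[OF a])
    fix w
    assume w: "w \<in> words n"
    have "bounded_measurable (G \<circ> cyl_map a w)"
      using G by (rule bounded_measurable_comp) simp
    then show "\<bar>X w - Y w\<bar> \<le> 2 * \<delta> w"
      unfolding X_def Y_def using unit_integral_mult_near_const[OF _ F, of "G \<circ> cyl_map a w" "\<delta> w"] \<delta>[OF w]
      by (simp add: comp_def)
  qed
  finally show ?thesis
    by (simp add: sum_distrib_left mult_ac)
qed

lemma sum_cyl_len_sq_tendsto_0:
  assumes a: "0 < a" "a < 1"
  shows "(\<lambda>n. \<Sum>w\<in>words n. cyl_len a w * cyl_len a w) \<longlonglongrightarrow> 0"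
proof (rule tendsto_sandwich[OF _ _ tendsto_const])
  show "\<forall>\<^sub>F n in sequentially. 0 \<le> (\<Sum>w\<in>words n. cyl_len a w * cyl_len a w)"
    by (intro always_eventually allI sum_nonneg) simp
  have "(\<Sum>w\<in>words n. cyl_len a w * cyl_len a w) \<le> (\<Sum>w\<in>words n. cyl_len a w * max a (1 - a) ^ n)" for n
    using cyl_len_le_power[OF a] cyl_len_nonneg[OF a] by (intro sum_mono mult_left_mono) (auto simp: words_def)
  also have "\<dots> n = max a (1 - a) ^ n" for n
    using sum_cyl_len[OF a] by (simp flip: sum_distrib_right)
  finally show "\<forall>\<^sub>F n in sequentially. (\<Sum>w\<in>words n. cyl_len a w * cyl_len a w) \<le> max a (1 - a) ^ n"
    by simp
  show "(\<lambda>n. max a (1 - a) ^ n) \<longlonglongrightarrow> 0"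
    using a by (intro LIMSEQ_power_zero) auto
qed

lemma decorrelation_tendsto_0:
  assumes a: "0 < a" "a < 1" and G: "\<And>n. bounded_measurable (G n)"
    and F: "bounded_measurable F" "\<And>x. \<bar>F x\<bar> \<le> 1"
    and \<delta>: "\<And>n w y. w \<in> words n \<Longrightarrow> y \<in> {0..1} \<Longrightarrow> \<bar>G n (cyl_map a w y) - G n (cyl_map a w 0)\<bar> \<le> \<delta> n w"
    and \<delta>_tendsto_0: "(\<lambda>n. \<Sum>w\<in>words n. cyl_len a w * \<delta> n w) \<longlonglongrightarrow> 0"
  shows "(\<lambda>n. unit_integral (\<lambda>x. G n x * F ((T a ^^ n) x)) - unit_integral F * unit_integral (G n)) \<longlonglongrightarrow> 0"
proof (rule Lim_null_comparison[OF always_eventually])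
  show "\<forall>n. norm (unit_integral (\<lambda>x. G n x * F ((T a ^^ n) x)) - unit_integral F * unit_integral (G n))
      \<le> 2 * (\<Sum>w\<in>words n. cyl_len a w * \<delta> n w)"
    using decorrelation_on_cylinders[OF a G F] \<delta> by simp
  show "(\<lambda>n. 2 * (\<Sum>w\<in>words n. cyl_len a w * \<delta> n w)) \<longlonglongrightarrow> 0"
    using \<delta>_tendsto_0 by (rule tendsto_mult_right_zero)
qed

lemma product_oscillation_on_cylinders:
  fixes a :: "nat \<Rightarrow> real" and g :: "nat \<Rightarrow> real \<Rightarrow> real"
  assumes aj: "0 < a j" "a j < 1" and aB: "\<And>i. i \<in> B \<Longrightarrow> 0 < a i \<and> a i < 1"
    and faster: "\<And>i. i \<in> B \<Longrightarrow> entropy (a i) < entropy (a j)"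
    and h: "L-lipschitz_on UNIV h" "\<And>x. \<bar>h x\<bar> \<le> 1"
    and g: "\<And>i. i \<in> B \<Longrightarrow> L-lipschitz_on UNIV (g i)" "\<And>i x. i \<in> B \<Longrightarrow> \<bar>g i x\<bar> \<le> 1"
  defines "G n x \<equiv> h x * (\<Prod>i\<in>B. g i ((T (a i) ^^ n) x))"
  shows "\<exists>\<delta>. (\<forall>n w y. w \<in> words n \<longrightarrow> y \<in> {0..1} \<longrightarrow>
      \<bar>G n (cyl_map (a j) w y) - G n (cyl_map (a j) w 0)\<bar> \<le> \<delta> n w)
    \<and> (\<lambda>n. \<Sum>w\<in>words n. cyl_len (a j) w * \<delta> n w) \<longlonglongrightarrow> 0"
proof -
  have "\<forall>i\<in>B. \<exists>\<beta>. (\<forall>n w. 0 \<le> \<beta> n w) \<and>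
    (\<forall>n w x x'. w \<in> words n \<longrightarrow> x \<in> cylinder (a j) w \<longrightarrow> x' \<in> cylinder (a j) w \<longrightarrow>
      min 1 \<bar>(T (a i) ^^ n) x - (T (a i) ^^ n) x'\<bar> \<le> \<beta> n w) \<and>
    (\<lambda>n. \<Sum>w\<in>words n. cyl_len (a j) w * \<beta> n w) \<longlonglongrightarrow> 0"
    using T_funpow_oscillation_on_cylinders[OF aj] aB faster by blast
  from bchoice[OF this] obtain \<beta> where \<beta>: "\<forall>i\<in>B. (\<forall>n w. 0 \<le> \<beta> i n w) \<and>
    (\<forall>n w x x'. w \<in> words n \<longrightarrow> x \<in> cylinder (a j) w \<longrightarrow> x' \<in> cylinder (a j) w \<longrightarrow>
      min 1 \<bar>(T (a i) ^^ n) x - (T (a i) ^^ n) x'\<bar> \<le> \<beta> i n w) \<and>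
    (\<lambda>n. \<Sum>w\<in>words n. cyl_len (a j) w * \<beta> i n w) \<longlonglongrightarrow> 0" ..
  define \<delta> where "\<delta> n w = L * cyl_len (a j) w + (2 + L) * (\<Sum>i\<in>B. \<beta> i n w)" for n w
  have "\<bar>G n (cyl_map (a j) w y) - G n (cyl_map (a j) w 0)\<bar> \<le> \<delta> n w"
    if w: "w \<in> words n" and y: "y \<in> {0..1}" for n w y
  proof -
    define x x' where "x = cyl_map (a j) w y" and "x' = cyl_map (a j) w 0"
    have x: "x \<in> cylinder (a j) w" "x' \<in> cylinder (a j) w"
      using y by (auto simp: cylinder_def x_def x'_def)
    have "\<bar>G n x - G n x'\<bar> \<le> L * \<bar>x - x'\<bar> + (2 + L) * (\<Sum>i\<in>B. min 1 \<bar>(T (a i) ^^ n) x - (T (a i) ^^ n) x'\<bar>)"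
      unfolding G_def using h g by (intro oscillation_product_le) auto
    also have "\<dots> \<le> \<delta> n w"
      unfolding \<delta>_def using cylinder_diam[OF aj x] \<beta> w x lipschitz_on_nonneg[OF h(1)]
      by (intro add_mono mult_left_mono sum_mono) auto
    finally show ?thesis
      by (simp add: x_def x'_def)
  qed
  moreover have "(\<Sum>w\<in>words n. cyl_len (a j) w * \<delta> n w)
      = L * (\<Sum>w\<in>words n. cyl_len (a j) w * cyl_len (a j) w)
        + (2 + L) * (\<Sum>i\<in>B. \<Sum>w\<in>words n. cyl_len (a j) w * \<beta> i n w)" for n
  proof -
    have "(\<Sum>w\<in>words n. cyl_len (a j) w * \<delta> n w)
        = L * (\<Sum>w\<in>words n. cyl_len (a j) w * cyl_len (a j) w)
          + (2 + L) * (\<Sum>w\<in>words n. \<Sum>i\<in>B. cyl_len (a j) w * \<beta> i n w)"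
      unfolding \<delta>_def by (simp add: distrib_left sum.distrib sum_distrib_left mult_ac)
    then show ?thesis
      using sum.swap[of "\<lambda>w i. cyl_len (a j) w * \<beta> i n w" B "words n"] by simp
  qed
  moreover have "(\<lambda>n. L * (\<Sum>w\<in>words n. cyl_len (a j) w * cyl_len (a j) w)
        + (2 + L) * (\<Sum>i\<in>B. \<Sum>w\<in>words n. cyl_len (a j) w * \<beta> i n w)) \<longlonglongrightarrow> L * 0 + (2 + L) * (\<Sum>i\<in>B. 0)"
    using \<beta> sum_cyl_len_sq_tendsto_0[OF aj] by (intro tendsto_add tendsto_mult_left tendsto_sum) auto
  ultimately show ?thesis
    by (intro exI[of _ \<delta>]) simp
qed

lemma lipschitz_mixing_step:
  fixes a :: "nat \<Rightarrow> real" and g :: "nat \<Rightarrow> real \<Rightarrow> real"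
  assumes B: "finite B" "j \<notin> B"
    and aj: "0 < a j" "a j < 1" and aB: "\<And>i. i \<in> B \<Longrightarrow> 0 < a i \<and> a i < 1"
    and fastest: "\<And>i. i \<in> B \<Longrightarrow> entropy (a i) < entropy (a j)"
    and g0: "L-lipschitz_on UNIV g0" "\<And>x. \<bar>g0 x\<bar> \<le> 1"
    and g: "\<And>i. i \<in> insert j B \<Longrightarrow> L-lipschitz_on UNIV (g i)" "\<And>i x. i \<in> insert j B \<Longrightarrow> \<bar>g i x\<bar> \<le> 1"
    and IH: "(\<lambda>n. unit_integral (\<lambda>x. g0 x * (\<Prod>i\<in>B. g i ((T (a i) ^^ n) x))))
      \<longlonglongrightarrow> unit_integral g0 * (\<Prod>i\<in>B. unit_integral (g i))"
  shows "(\<lambda>n. unit_integral (\<lambda>x. g0 x * (\<Prod>i\<in>insert j B. g i ((T (a i) ^^ n) x))))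
      \<longlonglongrightarrow> unit_integral g0 * (\<Prod>i\<in>insert j B. unit_integral (g i))"
proof -
  define G where "G n x = g0 x * (\<Prod>i\<in>B. g i ((T (a i) ^^ n) x))" for n x
  obtain \<delta> where \<delta>: "\<And>n w y. w \<in> words n \<Longrightarrow> y \<in> {0..1} \<Longrightarrow>
      \<bar>G n (cyl_map (a j) w y) - G n (cyl_map (a j) w 0)\<bar> \<le> \<delta> n w"
    and \<delta>_tendsto_0: "(\<lambda>n. \<Sum>w\<in>words n. cyl_len (a j) w * \<delta> n w) \<longlonglongrightarrow> 0"
    using product_oscillation_on_cylinders[where a=a and j=j and B=B and h=g0 and g=g and L=L]
      aj aB fastest g0 g unfolding G_def by blast
  have bm_g: "bounded_measurable (g i)" if "i \<in> insert j B" for i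
    using g[OF that] by (rule lipschitz_bounded_measurable)
  have G: "bounded_measurable (G n)" for n
    unfolding G_def using lipschitz_bounded_measurable[OF g0] bm_g
    by (intro bounded_measurable_mult bounded_measurable_prod)
      (auto intro: bounded_measurable_comp[unfolded comp_def])
  have "(\<lambda>n. unit_integral (\<lambda>x. G n x * g j ((T (a j) ^^ n) x)) - unit_integral (g j) * unit_integral (G n))
      \<longlonglongrightarrow> 0"
    using g(2) by (intro decorrelation_tendsto_0[OF aj G bm_g _ \<delta> \<delta>_tendsto_0]) auto
  moreover have "(\<lambda>n. unit_integral (g j) * unit_integral (G n))
      \<longlonglongrightarrow> unit_integral (g j) * (unit_integral g0 * (\<Prod>i\<in>B. unit_integral (g i)))"
    using IH unfolding G_def by (rule tendsto_mult_left)
  ultimately have "(\<lambda>n. (unit_integral (\<lambda>x. G n x * g j ((T (a j) ^^ n) x)) - unit_integral (g j) * unit_integral (G n))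
      + unit_integral (g j) * unit_integral (G n))
      \<longlonglongrightarrow> 0 + unit_integral (g j) * (unit_integral g0 * (\<Prod>i\<in>B. unit_integral (g i)))"
    by (rule tendsto_add)
  then show ?thesis
    using B by (simp add: G_def mult_ac)
qed

lemma lipschitz_mixing:
  fixes a :: "nat \<Rightarrow> real" and g :: "nat \<Rightarrow> real \<Rightarrow> real"
  assumes B: "finite B" and a: "\<And>i. i \<in> B \<Longrightarrow> 0 < a i \<and> a i < 1"
    and entropy_inj: "inj_on (\<lambda>i. entropy (a i)) B"
    and g0: "L-lipschitz_on UNIV g0" "\<And>x. \<bar>g0 x\<bar> \<le> 1"
    and g: "\<And>i. i \<in> B \<Longrightarrow> L-lipschitz_on UNIV (g i)" "\<And>i x. i \<in> B \<Longrightarrow> \<bar>g i x\<bar> \<le> 1"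
  shows "(\<lambda>n. unit_integral (\<lambda>x. g0 x * (\<Prod>i\<in>B. g i ((T (a i) ^^ n) x))))
      \<longlonglongrightarrow> unit_integral g0 * (\<Prod>i\<in>B. unit_integral (g i))"
  using B
proof (induction rule: finite_remove_induct)
  case empty
  then show ?case by simp
next
  case (remove A)
  \<comment> \<open>peel off the map of largest entropy\<close>
  have "Max ((\<lambda>i. entropy (a i)) ` A) \<in> (\<lambda>i. entropy (a i)) ` A"
    using remove.hyps by (intro Max_in) auto
  then obtain j where j: "j \<in> A" "entropy (a j) = Max ((\<lambda>i. entropy (a i)) ` A)"
    by auto
  have "entropy (a i) < entropy (a j)" if i: "i \<in> A - {j}" for i
  proof -
    have "entropy (a i) \<le> entropy (a j)"
      using i j(2) Max_ge[of "(\<lambda>i. entropy (a i)) ` A" "entropy (a i)"] remove.hyps(1) by auto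
    moreover have "entropy (a i) \<noteq> entropy (a j)"
      using i j(1) remove.hyps(3) inj_onD[OF entropy_inj, of i j] by auto
    ultimately show ?thesis
      by simp
  qed
  then have "(\<lambda>n. unit_integral (\<lambda>x. g0 x * (\<Prod>i\<in>insert j (A - {j}). g i ((T (a i) ^^ n) x))))
      \<longlonglongrightarrow> unit_integral g0 * (\<Prod>i\<in>insert j (A - {j}). unit_integral (g i))"
    using remove.hyps j a g0 g remove.IH[OF j(1)]
    by (intro lipschitz_mixing_step) auto
  then show ?case
    using j(1) by (simp add: insert_absorb)
qed

section \<open>From Lipschitz observables to indicators\<close>

lemma lipschitz_cutoff:
  fixes K U :: "real set"
  assumes K: "compact K" and U: "open U" "K \<subseteq> U"
  obtains g L where "L-lipschitz_on UNIV (g :: real \<Rightarrow> real)" "\<And>x. 0 \<le> g x \<and> g x \<le> 1"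
    "\<And>x. x \<in> K \<Longrightarrow> g x = 1" "\<And>x. x \<notin> U \<Longrightarrow> g x = 0"
proof (cases "K = {}")
  case True
  show ?thesis
    by (rule that[where g="\<lambda>_. 0" and L=0]) (simp_all add: True lipschitz_on_def)
next
  case False
  \<comment> \<open>\<open>setdist K {} = 0\<close>, so the case \<open>U = UNIV\<close> needs its own positive value\<close>
  define d where "d = (if U = UNIV then 1 else setdist K (- U))"
  have d: "d > 0"
  proof (cases "U = UNIV")
    case False
    then have "setdist K (- U) \<noteq> 0"
      using \<open>K \<noteq> {}\<close> U setdist_eq_0_compact_closed[OF K, of "- U"] by auto
    moreover have "d = setdist K (- U)"
      using False by (simp add: d_def)
    ultimately show ?thesis
      using setdist_pos_le[of K "- U"] by linarith
  qed (simp add: d_def)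
  have far: "d \<le> infdist x K" if "x \<notin> U" for x
  proof -
    obtain k where k: "k \<in> K" "infdist x K = dist x k"
      using infdist_attains_inf[of K x] K \<open>K \<noteq> {}\<close> compact_imp_closed by blast
    have "d = setdist K (- U)"
      using that by (auto simp: d_def)
    also have "\<dots> \<le> dist k x"
      using k that by (intro setdist_le_dist) auto
    finally show ?thesis
      using k by (simp add: dist_commute)
  qed
  define g where "g x = max 0 (1 - infdist x K / d)" for x
  have "(1 / d)-lipschitz_on UNIV g"
  proof (rule lipschitz_onI)
    fix x y :: real
    have "dist (g x) (g y) \<le> \<bar>infdist x K / d - infdist y K / d\<bar>"
      unfolding g_def dist_real_def by (simp add: max_def abs_if)
    also have "\<dots> = \<bar>infdist x K - infdist y K\<bar> / d"
      using d by (simp add: diff_divide_distrib[symmetric])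
    also have "\<dots> \<le> 1 / d * dist x y"
      using d infdist_triangle_abs[of x K y] by (simp add: divide_right_mono)
    finally show "dist (g x) (g y) \<le> 1 / d * dist x y" .
  qed (use d in simp)
  moreover have "0 \<le> g x \<and> g x \<le> 1" for x
    using d infdist_nonneg[of x K] by (simp add: g_def)
  moreover have "g x = 1" if "x \<in> K" for x
    using that by (simp add: g_def)
  moreover have "g x = 0" if "x \<notin> U" for x
    using far[OF that] d by (simp add: g_def)
  ultimately show ?thesis
    by (rule that)
qed

lemma abs_indicator_diff_cutoff_le:
  fixes g :: "real \<Rightarrow> real"
  assumes "K \<subseteq> A" "A \<subseteq> U" "\<And>x. 0 \<le> g x \<and> g x \<le> 1"
    "\<And>x. x \<in> K \<Longrightarrow> g x = 1" "\<And>x. x \<notin> U \<Longrightarrow> g x = 0"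
  shows "\<bar>indicator A x - g x\<bar> \<le> indicator (U - K) x"
proof -
  consider "x \<in> K" | "x \<in> U - K" | "x \<notin> U"
    by blast
  then show ?thesis
  proof cases
    case 1
    then show ?thesis
      using assms(1,4) by (auto simp: indicator_def)
  next
    case 2
    then show ?thesis
      using assms(3)[of x] by (auto simp: indicator_def)
  next
    case 3
    then show ?thesis
      using assms(2,5) by (auto simp: indicator_def)
  qed
qed

lemma unit_integral_indicator_le:
  assumes X: "X \<in> sets borel" and small: "emeasure lborel X < ennreal c"
  shows "unit_integral (indicator X) \<le> c"
proof -
  have fin: "emeasure lborel X < top"
    using small ennreal_less_top[of c] by (rule order.strict_trans)
  have "unit_integral (indicator X) = measure lborel (X \<inter> {0..1})"
    using X by (rule unit_integral_indicator)
  also have "\<dots> \<le> measure lborel X"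
    using X fin by (intro measure_mono_fmeasurable) (auto simp: fmeasurable_def)
  also have "measure lborel X < c"
    using small fin by (simp add: emeasure_eq_ennreal_measure ennreal_less_iff)
  finally show ?thesis
    by simp
qed

lemma indicator_lipschitz_approx:
  assumes A: "A \<in> sets borel" "A \<subseteq> {0..1}" and e: "e > 0"
  obtains g L where "L-lipschitz_on UNIV (g :: real \<Rightarrow> real)" "\<And>x. \<bar>g x\<bar> \<le> 1"
    "unit_integral (\<lambda>x. \<bar>indicator A x - g x\<bar>) \<le> e"
proof -
  obtain U where U: "open U" "A \<subseteq> U" "emeasure lborel (U - A) < ennreal (e / 2)"
    using outer_regular_lborel[OF A(1), of "e / 2"] e by auto
  obtain V where V: "open V" "{0..1} - A \<subseteq> V" "emeasure lborel (V - ({0..1} - A)) < ennreal (e / 2)"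
    using outer_regular_lborel[of "{0..1} - A" "e / 2"] A(1) e by auto
  \<comment> \<open>an inner compact approximation of \<open>A\<close>, obtained from the outer one of its complement\<close>
  define K where "K = {0..1} - V"
  have KA: "K \<subseteq> A"
    using V(2) by (auto simp: K_def)
  have K: "compact K"
    unfolding K_def Diff_eq using V(1) by (intro compact_Int_closed) auto
  obtain L g where g: "L-lipschitz_on UNIV (g :: real \<Rightarrow> real)" "\<And>x. 0 \<le> g x \<and> g x \<le> 1"
    "\<And>x. x \<in> K \<Longrightarrow> g x = 1" "\<And>x. x \<notin> U \<Longrightarrow> g x = 0"
    by (rule lipschitz_cutoff[OF K U(1) order.trans[OF KA U(2)]]) (rule that)
  have sets: "U - A \<in> sets borel" "V - ({0..1} - A) \<in> sets borel"
    using U(1) V(1) A(1) by auto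
  have "\<bar>indicator A x - g x\<bar> \<le> indicator (U - A) x + indicator (V - ({0..1} - A)) x"
    if x: "x \<in> {0..1}" for x
  proof -
    have "\<bar>indicator A x - g x\<bar> \<le> indicator (U - K) x"
      using KA U(2) g(2-4) by (rule abs_indicator_diff_cutoff_le)
    also have "\<dots> \<le> indicator (U - A) x + indicator (V - ({0..1} - A)) x"
      using x by (cases "x \<in> A") (auto simp: indicator_def K_def)
    finally show ?thesis .
  qed
  moreover have g_bound: "\<bar>g x\<bar> \<le> 1" for x
    using g(2)[of x] by (simp add: abs_le_iff)
  moreover have "bounded_measurable (\<lambda>x. \<bar>indicator A x - g x\<bar>)"
    using A(1) lipschitz_bounded_measurable[OF g(1) g_bound]
    by (intro bounded_measurable_abs bounded_measurable_diff bounded_measurable_indicator)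
  moreover have "bounded_measurable (\<lambda>x. indicator (U - A) x + indicator (V - ({0..1} - A)) x)"
    using sets by (intro bounded_measurable_add bounded_measurable_indicator)
  ultimately have "unit_integral (\<lambda>x. \<bar>indicator A x - g x\<bar>)
      \<le> unit_integral (\<lambda>x. indicator (U - A) x + indicator (V - ({0..1} - A)) x)"
    by (intro unit_integral_mono)
  also have "\<dots> = unit_integral (indicator (U - A)) + unit_integral (indicator (V - ({0..1} - A)))"
    using sets by (intro unit_integral_add bounded_measurable_indicator)
  also have "\<dots> \<le> e / 2 + e / 2"
    using sets U(3) V(3) by (intro add_mono unit_integral_indicator_le)
  finally show ?thesis
    using that[OF g(1) g_bound] by simp
qed

lemma LIMSEQ_of_uniform_approx:
  fixes X :: "nat \<Rightarrow> real"
  assumes "\<And>e. e > 0 \<Longrightarrow> \<exists>Y c. Y \<longlonglongrightarrow> c \<and> (\<forall>n. \<bar>X n - Y n\<bar> \<le> e) \<and> \<bar>c - l\<bar> \<le> e"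
  shows "X \<longlonglongrightarrow> l"
proof (rule tendstoI)
  fix r :: real
  assume r: "r > 0"
  then obtain Y c where Y: "Y \<longlonglongrightarrow> c" "\<And>n. \<bar>X n - Y n\<bar> \<le> r / 4" "\<bar>c - l\<bar> \<le> r / 4"
    using assms[of "r / 4"] by auto
  have "\<forall>\<^sub>F n in sequentially. dist (Y n) c < r / 4"
    using Y(1) r by (intro tendstoD) auto
  then show "\<forall>\<^sub>F n in sequentially. dist (X n) l < r"
  proof eventually_elim
    case (elim n)
    then show ?case
      using Y(2)[of n] Y(3) unfolding dist_real_def by linarith
  qed
qed

lemma bounded_measurable_comp_T_funpow:
  "bounded_measurable f \<Longrightarrow> bounded_measurable (\<lambda>x. f ((T a ^^ n) x))"
  using bounded_measurable_comp[of f "T a ^^ n"] by (simp add: comp_def)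

lemma unit_integral_product_perturbation:
  fixes a :: "nat \<Rightarrow> real" and f g :: "nat \<Rightarrow> real \<Rightarrow> real"
  assumes a: "\<And>i. i \<in> B \<Longrightarrow> 0 < a i \<and> a i < 1"
    and f0: "bounded_measurable f0" "\<And>x. \<bar>f0 x\<bar> \<le> 1" and g0: "bounded_measurable g0" "\<And>x. \<bar>g0 x\<bar> \<le> 1"
    and f: "\<And>i. i \<in> B \<Longrightarrow> bounded_measurable (f i)" "\<And>i x. i \<in> B \<Longrightarrow> \<bar>f i x\<bar> \<le> 1"
    and g: "\<And>i. i \<in> B \<Longrightarrow> bounded_measurable (g i)" "\<And>i x. i \<in> B \<Longrightarrow> \<bar>g i x\<bar> \<le> 1"
  shows "\<bar>unit_integral (\<lambda>x. f0 x * (\<Prod>i\<in>B. f i ((T (a i) ^^ n) x)))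
      - unit_integral (\<lambda>x. g0 x * (\<Prod>i\<in>B. g i ((T (a i) ^^ n) x)))\<bar>
    \<le> unit_integral (\<lambda>x. \<bar>f0 x - g0 x\<bar>) + (\<Sum>i\<in>B. unit_integral (\<lambda>x. \<bar>f i x - g i x\<bar>))"
proof -
  define F where "F x = f0 x * (\<Prod>i\<in>B. f i ((T (a i) ^^ n) x))" for x
  define G where "G x = g0 x * (\<Prod>i\<in>B. g i ((T (a i) ^^ n) x))" for x
  have FG: "bounded_measurable F" "bounded_measurable G"
    unfolding F_def G_def using f0 g0 f g
    by (auto intro!: bounded_measurable_mult bounded_measurable_prod bounded_measurable_comp_T_funpow)
  have err: "bounded_measurable (\<lambda>x. \<bar>f i x - g i x\<bar>)" if "i \<in> B" for i
    using f g that by (intro bounded_measurable_abs bounded_measurable_diff)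
  have errT: "bounded_measurable (\<lambda>x. \<bar>f i ((T (a i) ^^ n) x) - g i ((T (a i) ^^ n) x)\<bar>)" if "i \<in> B" for i
    using err[OF that] by (rule bounded_measurable_comp_T_funpow)
  have err0: "bounded_measurable (\<lambda>x. \<bar>f0 x - g0 x\<bar>)"
    using f0 g0 by (intro bounded_measurable_abs bounded_measurable_diff)
  have "\<bar>unit_integral F - unit_integral G\<bar> \<le> unit_integral (\<lambda>x. \<bar>F x - G x\<bar>)"
    using FG by (rule unit_integral_abs_diff_le)
  also have "\<dots> \<le> unit_integral (\<lambda>x. \<bar>f0 x - g0 x\<bar> + (\<Sum>i\<in>B. \<bar>f i ((T (a i) ^^ n) x) - g i ((T (a i) ^^ n) x)\<bar>))"
  proof (rule unit_integral_mono)
    show "bounded_measurable (\<lambda>x. \<bar>F x - G x\<bar>)"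
      using FG by (intro bounded_measurable_abs bounded_measurable_diff)
    show "bounded_measurable (\<lambda>x. \<bar>f0 x - g0 x\<bar> + (\<Sum>i\<in>B. \<bar>f i ((T (a i) ^^ n) x) - g i ((T (a i) ^^ n) x)\<bar>))"
      using errT err0 by (intro bounded_measurable_add bounded_measurable_sum)
    show "\<bar>F x - G x\<bar> \<le> \<bar>f0 x - g0 x\<bar> + (\<Sum>i\<in>B. \<bar>f i ((T (a i) ^^ n) x) - g i ((T (a i) ^^ n) x)\<bar>)" for x
      unfolding F_def G_def using f0 g0 f g by (intro abs_mult_prod_diff_le) auto
  qed
  also have "\<dots> = unit_integral (\<lambda>x. \<bar>f0 x - g0 x\<bar>) + (\<Sum>i\<in>B. unit_integral (\<lambda>x. \<bar>f i ((T (a i) ^^ n) x) - g i ((T (a i) ^^ n) x)\<bar>))"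
    using unit_integral_add[OF err0 bounded_measurable_sum[where S=B, OF errT]]
      unit_integral_sum[where S=B, OF errT] by simp
  also have "(\<Sum>i\<in>B. unit_integral (\<lambda>x. \<bar>f i ((T (a i) ^^ n) x) - g i ((T (a i) ^^ n) x)\<bar>))
      = (\<Sum>i\<in>B. unit_integral (\<lambda>x. \<bar>f i x - g i x\<bar>))"
    using a err by (intro sum.cong refl unit_integral_T_funpow[of "a _" "\<lambda>x. \<bar>f _ x - g _ x\<bar>"]) auto
  finally show ?thesis
    by (simp add: F_def G_def)
qed

lemma indicator_lipschitz_approx_family:
  assumes I: "finite I" and A: "\<forall>i\<in>I. A i \<in> sets borel \<and> A i \<subseteq> {0..1}" and e: "e > 0"
  obtains M g where "\<And>i. i \<in> I \<Longrightarrow> M-lipschitz_on UNIV (g i :: real \<Rightarrow> real)" "\<And>i x. i \<in> I \<Longrightarrow> \<bar>g i x\<bar> \<le> 1"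
    "\<And>i. i \<in> I \<Longrightarrow> unit_integral (\<lambda>x. \<bar>indicator (A i) x - g i x\<bar>) \<le> e"
proof -
  have "\<forall>i\<in>I. \<exists>g L. L-lipschitz_on UNIV g \<and> (\<forall>x. \<bar>g x\<bar> \<le> 1)
      \<and> unit_integral (\<lambda>x. \<bar>indicator (A i) x - g x\<bar>) \<le> e"
  proof
    fix i
    assume "i \<in> I"
    show "\<exists>g L. L-lipschitz_on UNIV g \<and> (\<forall>x. \<bar>g x\<bar> \<le> 1) \<and> unit_integral (\<lambda>x. \<bar>indicator (A i) x - g x\<bar>) \<le> e"
    proof (rule indicator_lipschitz_approx[OF _ _ e])
      show "A i \<in> sets borel" "A i \<subseteq> {0..1}"
        using A \<open>i \<in> I\<close> by auto
    qed blast
  qed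
  then obtain g where "\<forall>i\<in>I. \<exists>L. L-lipschitz_on UNIV (g i) \<and> (\<forall>x. \<bar>g i x\<bar> \<le> 1)
      \<and> unit_integral (\<lambda>x. \<bar>indicator (A i) x - g i x\<bar>) \<le> e"
    by (rule bchoice[THEN exE])
  then obtain L where g: "\<And>i. i \<in> I \<Longrightarrow> (L i)-lipschitz_on UNIV (g i)" "\<And>i x. i \<in> I \<Longrightarrow> \<bar>g i x\<bar> \<le> 1"
      "\<And>i. i \<in> I \<Longrightarrow> unit_integral (\<lambda>x. \<bar>indicator (A i) x - g i x\<bar>) \<le> e"
    by (metis bchoice)
  show ?thesis
  proof (rule that)
    show "(Max (L ` I))-lipschitz_on UNIV (g i)" if "i \<in> I" for i
      using g(1)[OF that] Max_ge[of "L ` I" "L i"] I that by (auto intro: lipschitz_on_mono)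
  qed (use g in auto)
qed

lemma abs_prod_unit_integral_diff_le:
  fixes f g :: "'i \<Rightarrow> real \<Rightarrow> real"
  assumes f0: "bounded_measurable f0" "\<And>x. \<bar>f0 x\<bar> \<le> 1" and g0: "bounded_measurable g0" "\<And>x. \<bar>g0 x\<bar> \<le> 1"
    and f: "\<And>i. i \<in> B \<Longrightarrow> bounded_measurable (f i)" "\<And>i x. i \<in> B \<Longrightarrow> \<bar>f i x\<bar> \<le> 1"
    and g: "\<And>i. i \<in> B \<Longrightarrow> bounded_measurable (g i)" "\<And>i x. i \<in> B \<Longrightarrow> \<bar>g i x\<bar> \<le> 1"
  shows "\<bar>unit_integral f0 * (\<Prod>i\<in>B. unit_integral (f i)) - unit_integral g0 * (\<Prod>i\<in>B. unit_integral (g i))\<bar>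
    \<le> unit_integral (\<lambda>x. \<bar>f0 x - g0 x\<bar>) + (\<Sum>i\<in>B. unit_integral (\<lambda>x. \<bar>f i x - g i x\<bar>))"
proof -
  have "\<bar>unit_integral f0 * (\<Prod>i\<in>B. unit_integral (f i)) - unit_integral g0 * (\<Prod>i\<in>B. unit_integral (g i))\<bar>
      \<le> \<bar>unit_integral f0 - unit_integral g0\<bar> + (\<Sum>i\<in>B. \<bar>unit_integral (f i) - unit_integral (g i)\<bar>)"
    using f0 g0 f g by (intro abs_mult_prod_diff_le unit_integral_abs_le) auto
  also have "\<dots> \<le> unit_integral (\<lambda>x. \<bar>f0 x - g0 x\<bar>) + (\<Sum>i\<in>B. unit_integral (\<lambda>x. \<bar>f i x - g i x\<bar>))"
    using f0 g0 f g by (intro add_mono sum_mono unit_integral_abs_diff_le) auto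
  finally show ?thesis .
qed

lemma indicator_mixing:
  fixes a :: "nat \<Rightarrow> real" and A :: "nat \<Rightarrow> real set"
  assumes B: "finite B" "0 \<notin> B" and a: "\<And>i. i \<in> B \<Longrightarrow> 0 < a i \<and> a i < 1"
    and entropy_inj: "inj_on (\<lambda>i. entropy (a i)) B"
    and A: "\<And>i. i \<in> insert 0 B \<Longrightarrow> A i \<in> sets borel" "\<And>i. i \<in> insert 0 B \<Longrightarrow> A i \<subseteq> {0..1}"
  shows "(\<lambda>n. unit_integral (\<lambda>x. indicator (A 0) x * (\<Prod>i\<in>B. indicator (A i) ((T (a i) ^^ n) x))))
    \<longlonglongrightarrow> unit_integral (indicator (A 0)) * (\<Prod>i\<in>B. unit_integral (indicator (A i)))"
proof (rule LIMSEQ_of_uniform_approx)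
  fix e :: real
  assume "e > 0"
  define e' where "e' = e / (real (card B) + 1)"
  have "e' > 0"
    using \<open>e > 0\<close> by (simp add: e'_def)
  have "e' + (\<Sum>i\<in>B. e') = e' * (real (card B) + 1)"
    by (simp add: algebra_simps)
  also have "\<dots> = e"
    unfolding e'_def by (simp add: add_pos_nonneg)
  finally have e'_sum: "e' + (\<Sum>i\<in>B. e') = e" .
  have fin: "finite (insert 0 B)"
    using B(1) by simp
  have A': "\<forall>i\<in>insert 0 B. A i \<in> sets borel \<and> A i \<subseteq> {0..1}"
    using A by blast
  obtain M g where g: "\<And>i. i \<in> insert 0 B \<Longrightarrow> M-lipschitz_on UNIV (g i)" "\<And>i x. i \<in> insert 0 B \<Longrightarrow> \<bar>g i x\<bar> \<le> 1"
    "\<And>i. i \<in> insert 0 B \<Longrightarrow> unit_integral (\<lambda>x. \<bar>indicator (A i) x - g i x\<bar>) \<le> e'"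
    by (rule indicator_lipschitz_approx_family[OF fin A' \<open>e' > 0\<close>]) (rule that)
  have bm: "bounded_measurable (g i)" "bounded_measurable (indicator (A i))" if "i \<in> insert 0 B" for i
    using lipschitz_bounded_measurable[OF g(1,2)] A(1) that by (auto intro: bounded_measurable_indicator)
  have ind: "\<bar>indicator S x :: real\<bar> \<le> 1" for S x
    by (simp add: indicator_def)
  have "unit_integral (\<lambda>x. \<bar>indicator (A 0) x - g 0 x\<bar>)
      + (\<Sum>i\<in>B. unit_integral (\<lambda>x. \<bar>indicator (A i) x - g i x\<bar>)) \<le> e' + (\<Sum>i\<in>B. e')"
    using g(3) by (intro add_mono sum_mono) auto
  then have error: "unit_integral (\<lambda>x. \<bar>indicator (A 0) x - g 0 x\<bar>)
      + (\<Sum>i\<in>B. unit_integral (\<lambda>x. \<bar>indicator (A i) x - g i x\<bar>)) \<le> e"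
    using e'_sum by simp
  define Y where "Y n = unit_integral (\<lambda>x. g 0 x * (\<Prod>i\<in>B. g i ((T (a i) ^^ n) x)))" for n
  have "Y \<longlonglongrightarrow> unit_integral (g 0) * (\<Prod>i\<in>B. unit_integral (g i))"
    unfolding Y_def using B(1) a entropy_inj g(1,2) by (intro lipschitz_mixing) auto
  moreover have "\<bar>unit_integral (\<lambda>x. indicator (A 0) x * (\<Prod>i\<in>B. indicator (A i) ((T (a i) ^^ n) x))) - Y n\<bar> \<le> e"
    for n
    unfolding Y_def using a bm ind g(2)
    by (intro order.trans[OF unit_integral_product_perturbation error]) auto
  moreover have "\<bar>unit_integral (g 0) * (\<Prod>i\<in>B. unit_integral (g i))
      - unit_integral (indicator (A 0)) * (\<Prod>i\<in>B. unit_integral (indicator (A i)))\<bar> \<le> e"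
    using abs_prod_unit_integral_diff_le[of "indicator (A 0)" "g 0" B "\<lambda>i. indicator (A i)" g] bm ind g(2) error
    by (simp add: abs_minus_commute)
  ultimately show "\<exists>Y c. Y \<longlonglongrightarrow> c
      \<and> (\<forall>n. \<bar>unit_integral (\<lambda>x. indicator (A 0) x * (\<Prod>i\<in>B. indicator (A i) ((T (a i) ^^ n) x))) - Y n\<bar> \<le> e)
      \<and> \<bar>c - unit_integral (indicator (A 0)) * (\<Prod>i\<in>B. unit_integral (indicator (A i)))\<bar> \<le> e"
    by blast
qed

lemma prod_indicator:
  "finite S \<Longrightarrow> (\<Prod>i\<in>S. indicator (A i) (f i) :: real) = (if \<forall>i\<in>S. f i \<in> A i then 1 else 0)"
  by (induction S rule: finite_induct) (auto simp: indicator_def)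

lemma measure_Int_Tpre:
  fixes a :: "nat \<Rightarrow> real" and A :: "nat \<Rightarrow> real set"
  assumes B: "finite B" and A0: "A0 \<in> sets borel" "A0 \<subseteq> {0..1}" and A: "\<And>i. i \<in> B \<Longrightarrow> A i \<in> sets borel"
  shows "measure lborel (A0 \<inter> (\<Inter>i\<in>B. Tpre (a i) n (A i)))
    = unit_integral (\<lambda>x. indicator A0 x * (\<Prod>i\<in>B. indicator (A i) ((T (a i) ^^ n) x)))"
proof -
  define S where "S = A0 \<inter> (\<Inter>i\<in>B. Tpre (a i) n (A i))"
  have "Tpre (a i) n (A i) \<in> sets borel" if "i \<in> B" for i
    using A[OF that] unfolding Tpre_def by measurable
  then have S: "S \<in> sets borel"
    unfolding S_def using A0(1) B by (intro sets.Int sets.countable_INT'' countable_finite) auto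
  have "measure lborel S = unit_integral (indicator S)"
    using S A0(2) unit_integral_indicator[OF S] by (simp add: S_def Int_absorb2 le_infI1)
  also have "\<dots> = unit_integral (\<lambda>x. indicator A0 x * (\<Prod>i\<in>B. indicator (A i) ((T (a i) ^^ n) x)))"
    using B by (intro unit_integral_cong) (auto simp: S_def Tpre_def prod_indicator indicator_def)
  finally show ?thesis
    by (simp add: S_def)
qed

theorem mainTheorem18:
  fixes k :: nat and a :: "nat \<Rightarrow> real" and A :: "nat \<Rightarrow> real set"
  assumes a_range: "\<And>i. i \<in> {1..k} \<Longrightarrow> 0 < a i \<and> a i < 1"
    and a_distinct: "\<And>i j. i \<in> {1..k} \<Longrightarrow> j \<in> {1..k} \<Longrightarrow> i \<noteq> j \<Longrightarrow> a i \<noteq> a j"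
    and a_not_refl: "\<And>i j. i \<in> {1..k} \<Longrightarrow> j \<in> {1..k} \<Longrightarrow> i \<noteq> j \<Longrightarrow> a i \<noteq> 1 - a j"
    and A_borel: "\<And>i. i \<in> {0..k} \<Longrightarrow> A i \<in> sets borel"
    and A_sub: "\<And>i. i \<in> {0..k} \<Longrightarrow> A i \<subseteq> {0..1}"
  shows "(\<lambda>n. measure lborel (A 0 \<inter> (\<Inter>i\<in>{1..k}. Tpre (a i) n (A i))))
           \<longlonglongrightarrow> (\<Prod>i\<in>{0..k}. measure lborel (A i))"
proof -
  have "inj_on (\<lambda>i. entropy (a i)) {1..k}"
  proof (rule inj_onI)
    fix i j
    assume "i \<in> {1..k}" "j \<in> {1..k}" "entropy (a i) = entropy (a j)"
    then show "i = j"
      using entropy_eq_imp[of "a i" "a j"] a_range a_distinct a_not_refl by blast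
  qed
  then have "(\<lambda>n. unit_integral (\<lambda>x. indicator (A 0) x * (\<Prod>i\<in>{1..k}. indicator (A i) ((T (a i) ^^ n) x))))
      \<longlonglongrightarrow> unit_integral (indicator (A 0)) * (\<Prod>i\<in>{1..k}. unit_integral (indicator (A i)))"
    using a_range A_borel A_sub by (intro indicator_mixing) auto
  moreover have "measure lborel (A 0 \<inter> (\<Inter>i\<in>{1..k}. Tpre (a i) n (A i)))
      = unit_integral (\<lambda>x. indicator (A 0) x * (\<Prod>i\<in>{1..k}. indicator (A i) ((T (a i) ^^ n) x)))" for n
    using A_borel A_sub by (intro measure_Int_Tpre) auto
  moreover have "(\<Prod>i\<in>{0..k}. measure lborel (A i)) = (\<Prod>i\<in>{0..k}. unit_integral (indicator (A i)))"
    using unit_integral_indicator A_borel A_sub by (intro prod.cong) (auto simp: Int_absorb2)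
  then have "(\<Prod>i\<in>{0..k}. measure lborel (A i))
      = unit_integral (indicator (A 0)) * (\<Prod>i\<in>{1..k}. unit_integral (indicator (A i)))"
    by (simp add: prod.atLeast_Suc_atMost)
  ultimately show ?thesis
    by simp
qed

end
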